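(* Suppose that for each $h$ there is a linear projector $P_h:H^1(\Omega)\to\mathbb V_h$ with $P_h(H^1_0(\Omega))=\mathbb W_h$ and $\|P_hv\|_{H^1(\Omega)}\le B\|v\|_{H^1(\Omega)}$ for all $v\in H^1(\Omega)$, with $B$ independent of $h$. Then for all $h$ and all $g_h\in\mathbb T_h$, $$\|E_hg_h\|_{H^1(\Omega)}\le (1+2C_P)BC_E\|g_h\|_{H^{1/2}(\Gamma)} .$$
   Context: $\Omega\subset\mathbb{R}^d$ ($d=2$ or $3$) is a polygonal/polyhedral domain, $\Gamma=\partial\Omega$. For $g\in H^{1/2}(\Gamma)$, $Eg:=\operatorname{argmin}\{\|\nabla v\|_{L^2(\Omega)}: v\in H^1(\Omega),\ v|_\Gamma=g\}$ (the harmonic extension), and $C_E$ is a constant with $\|Eg\|_{H^1(\Omega)}\le C_E\|g\|_{H^{1/2}(\Gamma)}$. $C_P$ is a Poincaré constant: $\|v\|_{H^1(\Omega)}\le C_P\|\nabla v\|_{L^2(\Omega)}$ for $v\in H^1_0(\Omega)$. $\{\mathbb V_h\}_{h>0}$ are $H^1$-conforming Lagrange finite element spaces on simplicial meshes $\mathcal T_h$ of $\Omega$, $\mathbb T_h:=\{v_h|_\Gamma: v_h\in\mathbb V_h\}$, $\mathbb W_h:=\{v_h\in\mathbb V_h: v_h|_\Gamma=0\}$, and for $g_h\in\mathbb T_h$, $E_hg_h:=\operatorname{argmin}\{\|\nabla v_h\|_{L^2(\Omega)}: v_h\in\mathbb V_h,\ v_h|_\Gamma=g_h\}$. *)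

theory Defs
  imports "HOL-Analysis.Analysis"
begin

definition polyhedral_domain :: "'a::euclidean_space set \<Rightarrow> bool" where
  "polyhedral_domain \<Omega> \<longleftrightarrow> open \<Omega> \<and> bounded \<Omega> \<and> connected \<Omega> \<and> \<Omega> \<noteq> {} \<and>
     \<Omega> = interior (closure \<Omega>) \<and>
     (\<exists>\<P>. finite \<P> \<and> (\<forall>P\<in>\<P>. polytope P) \<and> closure \<Omega> = \<Union>\<P>)"

definition simplicial_mesh :: "'a::euclidean_space set set \<Rightarrow> 'a set \<Rightarrow> bool" where
  "simplicial_mesh \<T> \<Omega> \<longleftrightarrow> triangulation \<T> \<and>
     (\<forall>K\<in>\<T>. int DIM('a) simplex K) \<and> \<Union>\<T> = closure \<Omega>"

definition poly_deg_le :: "nat \<Rightarrow> ('a::euclidean_space \<Rightarrow> real) \<Rightarrow> bool" where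
  "poly_deg_le k f \<longleftrightarrow> (\<exists>A c. finite A \<and> (\<forall>\<alpha>\<in>A. (\<Sum>i\<in>Basis. \<alpha> i) \<le> k) \<and>
      f = (\<lambda>x. \<Sum>\<alpha>\<in>A. c \<alpha> * (\<Prod>i\<in>Basis. (x \<bullet> i) ^ \<alpha> i)))"

definition lagrange_space :: "'a::euclidean_space set \<Rightarrow> 'a set set \<Rightarrow> nat \<Rightarrow> ('a \<Rightarrow> real) set" where
  "lagrange_space \<Omega> \<T> k = {v. continuous_on (closure \<Omega>) v \<and>
      (\<forall>K\<in>\<T>. \<exists>f. poly_deg_le k f \<and> (\<forall>x\<in>K. v x = f x)) \<and>
      (\<forall>x. x \<notin> closure \<Omega> \<longrightarrow> v x = 0)}"

definition pderiv :: "('a::euclidean_space \<Rightarrow> real) \<Rightarrow> 'a \<Rightarrow> 'a \<Rightarrow> real" where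
  "pderiv f i x = frechet_derivative f (at x) i"

primrec Ck :: "nat \<Rightarrow> ('a::euclidean_space \<Rightarrow> real) \<Rightarrow> bool" where
  "Ck 0 f \<longleftrightarrow> continuous_on UNIV f"
| "Ck (Suc n) f \<longleftrightarrow> (\<forall>x. f differentiable (at x)) \<and> (\<forall>i\<in>Basis. Ck n (pderiv f i))"

definition smooth_fun :: "('a::euclidean_space \<Rightarrow> real) \<Rightarrow> bool" where
  "smooth_fun f \<longleftrightarrow> (\<forall>n. Ck n f)"

definition test_fun :: "'a::euclidean_space set \<Rightarrow> ('a \<Rightarrow> real) \<Rightarrow> bool" where
  "test_fun \<Omega> \<phi> \<longleftrightarrow> smooth_fun \<phi> \<and> (\<exists>K. compact K \<and> K \<subseteq> \<Omega> \<and> (\<forall>x. x \<notin> K \<longrightarrow> \<phi> x = 0))"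

definition L2 :: "'a::euclidean_space set \<Rightarrow> ('a \<Rightarrow> real) \<Rightarrow> bool" where
  "L2 \<Omega> f \<longleftrightarrow> f \<in> borel_measurable (lebesgue_on \<Omega>) \<and>
     integrable (lebesgue_on \<Omega>) (\<lambda>x. (f x)\<^sup>2)"

definition L2v :: "'a::euclidean_space set \<Rightarrow> ('a \<Rightarrow> 'a) \<Rightarrow> bool" where
  "L2v \<Omega> G \<longleftrightarrow> G \<in> borel_measurable (lebesgue_on \<Omega>) \<and>
     integrable (lebesgue_on \<Omega>) (\<lambda>x. (norm (G x))\<^sup>2)"

definition weak_grad :: "'a::euclidean_space set \<Rightarrow> ('a \<Rightarrow> real) \<Rightarrow> ('a \<Rightarrow> 'a) \<Rightarrow> bool" where
  "weak_grad \<Omega> v G \<longleftrightarrow> (\<forall>\<phi>. test_fun \<Omega> \<phi> \<longrightarrow> (\<forall>i\<in>Basis.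
      integral\<^sup>L (lebesgue_on \<Omega>) (\<lambda>x. v x * pderiv \<phi> i x) =
      - integral\<^sup>L (lebesgue_on \<Omega>) (\<lambda>x. (G x \<bullet> i) * \<phi> x)))"

definition H1 :: "'a::euclidean_space set \<Rightarrow> ('a \<Rightarrow> real) set" where
  "H1 \<Omega> = {v. L2 \<Omega> v \<and> (\<exists>G. L2v \<Omega> G \<and> weak_grad \<Omega> v G)}"

definition wgrad :: "'a::euclidean_space set \<Rightarrow> ('a \<Rightarrow> real) \<Rightarrow> 'a \<Rightarrow> 'a" where
  "wgrad \<Omega> v = (SOME G. L2v \<Omega> G \<and> weak_grad \<Omega> v G)"

definition grad_norm :: "'a::euclidean_space set \<Rightarrow> ('a \<Rightarrow> real) \<Rightarrow> real" where
  "grad_norm \<Omega> v = sqrt (integral\<^sup>L (lebesgue_on \<Omega>) (\<lambda>x. (norm (wgrad \<Omega> v x))\<^sup>2))"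

definition H1_norm :: "'a::euclidean_space set \<Rightarrow> ('a \<Rightarrow> real) \<Rightarrow> real" where
  "H1_norm \<Omega> v = sqrt (integral\<^sup>L (lebesgue_on \<Omega>) (\<lambda>x. (v x)\<^sup>2) +
                        integral\<^sup>L (lebesgue_on \<Omega>) (\<lambda>x. (norm (wgrad \<Omega> v x))\<^sup>2))"

definition H10 :: "'a::euclidean_space set \<Rightarrow> ('a \<Rightarrow> real) set" where
  "H10 \<Omega> = {v \<in> H1 \<Omega>. \<forall>e>0. \<exists>\<phi>. test_fun \<Omega> \<phi> \<and> H1_norm \<Omega> (\<lambda>x. v x - \<phi> x) < e}"

text \<open>Two H1 functions have the same trace on the boundary iff their difference
lies in H1_0 (kernel of the trace operator).  H^{1/2}(Gamma) is the trace space
H1/H1_0 with the quotient (minimal-extension) norm; the norm of the trace of u is:\<close>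
definition trace_norm :: "'a::euclidean_space set \<Rightarrow> ('a \<Rightarrow> real) \<Rightarrow> real" where
  "trace_norm \<Omega> u = Inf {H1_norm \<Omega> v | v. v \<in> H1 \<Omega> \<and> (\<lambda>x. v x - u x) \<in> H10 \<Omega>}"

definition lagrange_space0 :: "'a::euclidean_space set \<Rightarrow> 'a set set \<Rightarrow> nat \<Rightarrow> ('a \<Rightarrow> real) set" where
  "lagrange_space0 \<Omega> \<T> k = {v \<in> lagrange_space \<Omega> \<T> k. v \<in> H10 \<Omega>}"

end

theory Submission
  imports Defs "HOL-Computational_Algebra.Polynomial"
begin

(* Let w be the discrete harmonic extension of u and v any H^1 extension of u, i.e. v - u lies
   in H^1_0.  Since P fixes discrete functions and preserves zero traces, P v - w is discrete
   with zero trace, so P v competes with w in the minimisation of the gradient norm, and the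
   Poincare inequality for w - P v gives
     |w|_1 <= |w - P v|_1 + |P v|_1 <= (1 + 2 C_P) |P v|_1 <= (1 + 2 C_P) B |v|_1.
   The infimum of |v|_1 over all such v is the trace norm of u, and C_E >= 1.
   Since the weak gradient in the H^1 norm is picked by Hilbert choice, the triangle inequality
   for that norm rests on the uniqueness of weak gradients, i.e. on the fundamental lemma of the
   calculus of variations. *)

hide_const (open) Polynomial.pderiv

section \<open>Smooth functions\<close>

lemma pderiv_eqI:
  assumes "\<And>x. (f has_derivative D x) (at x)"
  shows "pderiv f i = (\<lambda>x. D x i)"
  using frechet_derivative_at[OF assms] by (auto simp: pderiv_def)

lemma has_derivative_pderiv:
  assumes "f differentiable (at x)"
  shows "(f has_derivative (\<lambda>h. pderiv f h x)) (at x)"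
  using assms frechet_derivative_works[of f "at x"] by (simp add: pderiv_def)

lemma pderiv_const: "pderiv (\<lambda>x. c) i = (\<lambda>x. 0)"
  by (rule pderiv_eqI) (rule has_derivative_const)

lemma pderiv_add:
  assumes "\<And>x. f differentiable (at x)" "\<And>x. g differentiable (at x)"
  shows "pderiv (\<lambda>x. f x + g x) i = (\<lambda>x. pderiv f i x + pderiv g i x)"
  by (rule pderiv_eqI)
     (rule has_derivative_add[OF has_derivative_pderiv[OF assms(1)] has_derivative_pderiv[OF assms(2)]])

lemma pderiv_mult:
  assumes "\<And>x. f differentiable (at x)" "\<And>x. g differentiable (at x)"
  shows "pderiv (\<lambda>x. f x * g x) i = (\<lambda>x. f x * pderiv g i x + pderiv f i x * g x)"
  by (rule pderiv_eqI)
     (rule has_derivative_mult[OF has_derivative_pderiv[OF assms(1)] has_derivative_pderiv[OF assms(2)]])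

lemma Ck_SucD: "Ck (Suc n) f \<Longrightarrow> Ck n f"
proof (induction n arbitrary: f)
  case 0
  then show ?case
    by (auto intro!: differentiable_imp_continuous_on simp: differentiable_on_def differentiable_at_withinI)
qed auto

lemma Ck_const: "Ck n (\<lambda>x. c)"
  by (induction n arbitrary: c) (auto simp: pderiv_const)

lemma Ck_add: "Ck n f \<Longrightarrow> Ck n g \<Longrightarrow> Ck n (\<lambda>x. f x + g x)"
  by (induction n arbitrary: f g) (auto intro!: continuous_intros simp: pderiv_add)

lemma Ck_mult: "Ck n f \<Longrightarrow> Ck n g \<Longrightarrow> Ck n (\<lambda>x. f x * g x)"
proof (induction n arbitrary: f g)
  case 0
  then show ?case by (auto intro!: continuous_intros)
next
  case (Suc n)
  then have "Ck n f" "Ck n g" by (auto intro: Ck_SucD)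
  with Suc show ?case
    by (auto simp: pderiv_mult Ck_add intro: differentiable_mult)
qed

lemma smooth_fun_const: "smooth_fun (\<lambda>x. c)"
  by (simp add: smooth_fun_def Ck_const)

lemma smooth_fun_add: "smooth_fun f \<Longrightarrow> smooth_fun g \<Longrightarrow> smooth_fun (\<lambda>x. f x + g x)"
  by (simp add: smooth_fun_def Ck_add)

lemma smooth_fun_mult: "smooth_fun f \<Longrightarrow> smooth_fun g \<Longrightarrow> smooth_fun (\<lambda>x. f x * g x)"
  by (simp add: smooth_fun_def Ck_mult)

lemma smooth_fun_diff:
  assumes "smooth_fun f" "smooth_fun g"
  shows "smooth_fun (\<lambda>x. f x - g x)"
  using smooth_fun_add[OF assms(1) smooth_fun_mult[OF smooth_fun_const[of "-1"] assms(2)]] by simp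

lemma smooth_fun_power: "smooth_fun f \<Longrightarrow> smooth_fun (\<lambda>x. f x ^ n)"
  by (induction n) (auto intro: smooth_fun_const smooth_fun_mult)

lemma smooth_fun_prod:
  "finite S \<Longrightarrow> (\<And>i. i \<in> S \<Longrightarrow> smooth_fun (F i)) \<Longrightarrow> smooth_fun (\<lambda>x. \<Prod>i\<in>S. F i x)"
  by (induction S rule: finite_induct) (auto intro: smooth_fun_const smooth_fun_mult)

lemma smooth_fun_imp_continuous_on: "smooth_fun f \<Longrightarrow> continuous_on S f"
  unfolding smooth_fun_def by (metis Ck.simps(1) continuous_on_subset subset_UNIV)


section \<open>Smooth cut-off functions of boxes\<close>

text \<open>\<open>flat_deriv n\<close> is the \<open>n\<close>-th derivative of the flat function \<open>exp (-1/t)\<close> (\<open>0\<close> for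
  \<open>t \<le> 0\<close>); the recursion for \<open>flat_poly\<close> is the product and chain rule in the variable \<open>1/t\<close>.\<close>

fun flat_poly :: "nat \<Rightarrow> real poly" where
  "flat_poly 0 = 1"
| "flat_poly (Suc n) = [:0, 0, 1:] * (flat_poly n - Polynomial.pderiv (flat_poly n))"

definition flat_deriv :: "nat \<Rightarrow> real \<Rightarrow> real" where
  "flat_deriv n t = (if t > 0 then poly (flat_poly n) (1/t) * exp (- (1/t)) else 0)"

lemma tendsto_poly_inverse_exp_at_right_0:
  "((\<lambda>t. poly p (1/t) * exp (- (1/t))) \<longlongrightarrow> (0::real)) (at_right 0)"
proof -
  have "((\<lambda>s. \<Sum>i\<le>degree p. coeff p i * (s ^ i / exp s)) \<longlongrightarrow> (\<Sum>i\<le>degree p. coeff p i * 0)) at_top"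
    by (intro tendsto_sum tendsto_mult tendsto_const tendsto_power_div_exp_0)
  then have "((\<lambda>s. poly p s * exp (- s)) \<longlongrightarrow> 0) at_top"
    by (simp add: poly_altdef sum_divide_distrib exp_minus field_simps)
  moreover have "filterlim (\<lambda>t::real. 1/t) at_top (at_right 0)"
    using filterlim_inverse_at_top_right by (simp add: inverse_eq_divide)
  ultimately show ?thesis
    using filterlim_compose by fastforce
qed

lemma has_real_derivative_poly_inverse_exp:
  assumes "x > 0"
  shows "((\<lambda>t. poly q (1/t) * exp (- (1/t))) has_real_derivative
          poly ([:0, 0, 1:] * (q - Polynomial.pderiv q)) (1/x) * exp (- (1/x))) (at x)"
proof -
  have "((\<lambda>t. poly q (1/t) * exp (- (1/t))) has_real_derivative
          poly (Polynomial.pderiv q) (1/x) * (- 1 / x\<^sup>2) * exp (- (1/x))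
          + poly q (1/x) * (exp (- (1/x)) * (1 / x\<^sup>2))) (at x)"
    using assms
    by (auto intro!: derivative_eq_intros DERIV_chain2[OF poly_DERIV]
             simp: power2_eq_square field_simps)
  moreover have "poly (Polynomial.pderiv q) (1/x) * (- 1 / x\<^sup>2) * exp (- (1/x))
          + poly q (1/x) * (exp (- (1/x)) * (1 / x\<^sup>2))
       = poly ([:0, 0, 1:] * (q - Polynomial.pderiv q)) (1/x) * exp (- (1/x))"
    using assms by (simp add: field_simps power2_eq_square)
  ultimately show ?thesis by simp
qed

lemma has_real_derivative_flat_deriv: "(flat_deriv n has_real_derivative flat_deriv (Suc n) x) (at x)"
proof (cases x "0::real" rule: linorder_cases)
  case less
  have "((\<lambda>t. 0) has_real_derivative flat_deriv (Suc n) x) (at x)"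
    using less by (simp add: flat_deriv_def)
  then show ?thesis
    by (rule has_field_derivative_transform_within_open[where S="{..<0}"])
       (use less in \<open>auto simp: flat_deriv_def\<close>)
next
  case greater
  have "((\<lambda>t. poly (flat_poly n) (1/t) * exp (- (1/t))) has_real_derivative flat_deriv (Suc n) x) (at x)"
    using has_real_derivative_poly_inverse_exp[OF greater] greater by (simp add: flat_deriv_def)
  then show ?thesis
    by (rule has_field_derivative_transform_within_open[where S="{0<..}"])
       (use greater in \<open>auto simp: flat_deriv_def\<close>)
next
  case equal
  have "\<forall>\<^sub>F t in at_right 0. poly (flat_poly n * [:0, 1:]) (1/t) * exp (- (1/t))
                             = (flat_deriv n t - flat_deriv n 0) / (t - 0)"
    by (auto simp: flat_deriv_def eventually_at_right_field intro!: exI[of _ 1])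
  then have right: "((\<lambda>t. (flat_deriv n t - flat_deriv n 0) / (t - 0)) \<longlongrightarrow> 0) (at_right 0)"
    by (rule Lim_transform_eventually[OF tendsto_poly_inverse_exp_at_right_0])
  have "\<forall>\<^sub>F t in at_left (0::real). 0 = (flat_deriv n t - flat_deriv n 0) / (t - 0)"
    by (auto simp: flat_deriv_def eventually_at_left_field intro!: exI[of _ "-1"])
  then have left: "((\<lambda>t. (flat_deriv n t - flat_deriv n 0) / (t - 0)) \<longlongrightarrow> 0) (at_left 0)"
    by (rule Lim_transform_eventually[OF tendsto_const])
  show ?thesis
    using right left unfolding equal has_field_derivative_iff
    by (simp add: filterlim_at_split flat_deriv_def)
qed

lemma smooth_fun_flat_deriv_ridge: "smooth_fun (\<lambda>x::'a::euclidean_space. flat_deriv n (s * (x \<bullet> i) + t))"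
proof -
  have deriv: "((\<lambda>x::'a. flat_deriv n (s * (x \<bullet> i) + t)) has_derivative
      (\<lambda>h. flat_deriv (Suc n) (s * (x \<bullet> i) + t) * (s * (h \<bullet> i)))) (at x)" for n x
  proof -
    have "((\<lambda>x::'a. s * (x \<bullet> i) + t) has_derivative (\<lambda>h. s * (h \<bullet> i))) (at x)"
      by (auto intro!: derivative_eq_intros)
    from has_derivative_compose[OF this has_real_derivative_flat_deriv[unfolded has_field_derivative_def]]
    show ?thesis by (simp add: o_def mult.commute)
  qed
  have "Ck k (\<lambda>x::'a. flat_deriv n (s * (x \<bullet> i) + t))" for k
  proof (induction k arbitrary: n)
    case 0
    show ?case
      by (simp add: continuous_at_imp_continuous_on has_derivative_continuous[OF deriv])
  next
    case (Suc k)
    have "pderiv (\<lambda>x::'a. flat_deriv n (s * (x \<bullet> i) + t)) j =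
        (\<lambda>x. flat_deriv (Suc n) (s * (x \<bullet> i) + t) * (s * (j \<bullet> i)))" for j
      by (rule pderiv_eqI) (rule deriv)
    moreover have "(\<lambda>x::'a. flat_deriv n (s * (x \<bullet> i) + t)) differentiable (at x)" for x
      using deriv unfolding differentiable_def by blast
    ultimately show ?case
      using Suc.IH by (simp add: Ck_mult Ck_const)
  qed
  then show ?thesis by (simp add: smooth_fun_def)
qed

lemma flat_nonneg: "0 \<le> flat_deriv 0 t"
  by (simp add: flat_deriv_def)

lemma flat_le_1: "flat_deriv 0 t \<le> 1"
  by (simp add: flat_deriv_def)

lemma flat_pos_iff: "flat_deriv 0 t > 0 \<longleftrightarrow> t > 0"
  by (simp add: flat_deriv_def)

lemma flat_mono: "s \<le> t \<Longrightarrow> flat_deriv 0 s \<le> flat_deriv 0 t"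
  by (auto simp: flat_deriv_def frac_le)

definition box_bump :: "'a::euclidean_space \<Rightarrow> 'a \<Rightarrow> real \<Rightarrow> 'a \<Rightarrow> real" where
  "box_bump p q e x = (\<Prod>i\<in>Basis. flat_deriv 0 (x \<bullet> i - p \<bullet> i - e) * flat_deriv 0 (q \<bullet> i - e - x \<bullet> i))"

lemma smooth_fun_box_bump: "smooth_fun (box_bump p q e)"
proof -
  have "smooth_fun (\<lambda>x. \<Prod>i\<in>Basis.
      flat_deriv 0 (1 * (x \<bullet> i) + (- (p \<bullet> i) - e)) * flat_deriv 0 ((-1) * (x \<bullet> i) + (q \<bullet> i - e)))"
    by (intro smooth_fun_prod smooth_fun_mult smooth_fun_flat_deriv_ridge finite_Basis)
  then show ?thesis
    unfolding box_bump_def by (simp add: algebra_simps)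
qed

lemma box_bump_nonneg: "0 \<le> box_bump p q e x"
  unfolding box_bump_def by (intro prod_nonneg) (auto intro: mult_nonneg_nonneg flat_nonneg)

lemma box_bump_le_1: "box_bump p q e x \<le> 1"
  unfolding box_bump_def
  by (intro prod_le_1) (auto intro: mult_nonneg_nonneg flat_nonneg mult_le_one flat_le_1)

lemma box_bump_pos_iff:
  "box_bump p q e x > 0 \<longleftrightarrow> (\<forall>i\<in>Basis. p \<bullet> i + e < x \<bullet> i \<and> x \<bullet> i < q \<bullet> i - e)"
proof
  assume pos: "box_bump p q e x > 0"
  show "\<forall>i\<in>Basis. p \<bullet> i + e < x \<bullet> i \<and> x \<bullet> i < q \<bullet> i - e"
  proof (rule ccontr)
    assume "\<not> ?thesis"
    then obtain i where "i \<in> Basis" "\<not> (p \<bullet> i + e < x \<bullet> i \<and> x \<bullet> i < q \<bullet> i - e)"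
      by blast
    then have "box_bump p q e x = 0"
      unfolding box_bump_def by (intro prod_zero bexI[of _ i]) (auto simp: flat_deriv_def)
    with pos show False by simp
  qed
next
  assume "\<forall>i\<in>Basis. p \<bullet> i + e < x \<bullet> i \<and> x \<bullet> i < q \<bullet> i - e"
  then show "box_bump p q e x > 0"
    unfolding box_bump_def by (intro prod_pos mult_pos_pos) (auto simp: flat_pos_iff)
qed

lemma box_bump_eq_0:
  assumes "i \<in> Basis" "\<not> (p \<bullet> i + e < x \<bullet> i \<and> x \<bullet> i < q \<bullet> i - e)"
  shows "box_bump p q e x = 0"
  using assms box_bump_pos_iff[of p q e x] box_bump_nonneg[of p q e x] by force

lemma box_bump_antimono: "e' \<le> e \<Longrightarrow> box_bump p q e x \<le> box_bump p q e' x"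
  unfolding box_bump_def
  by (intro prod_mono conjI mult_mono flat_mono mult_nonneg_nonneg flat_nonneg) auto

text \<open>Where \<open>box_bump p q (1 / Suc n)\<close> is bounded away from zero, the \<open>n\<close>-th power below
  tends to zero; so \<open>box_cutoff p q n\<close> converges pointwise to the indicator of \<open>box p q\<close>.\<close>

definition box_cutoff :: "'a::euclidean_space \<Rightarrow> 'a \<Rightarrow> nat \<Rightarrow> 'a \<Rightarrow> real" where
  "box_cutoff p q n x = 1 - (1 - box_bump p q (1 / Suc n) x) ^ n"

lemma smooth_fun_box_cutoff: "smooth_fun (box_cutoff p q n)"
  unfolding box_cutoff_def[abs_def]
  by (intro smooth_fun_diff smooth_fun_power smooth_fun_const smooth_fun_box_bump)

lemma box_cutoff_nonneg: "0 \<le> box_cutoff p q n x"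
  and box_cutoff_le_1: "box_cutoff p q n x \<le> 1"
  using box_bump_nonneg[of p q "1 / Suc n" x] box_bump_le_1[of p q "1 / Suc n" x]
  by (auto simp: box_cutoff_def power_le_one)

lemma box_cutoff_eq_0:
  assumes "x \<notin> cbox (p + (1 / Suc n) *\<^sub>R One) (q - (1 / Suc n) *\<^sub>R One)"
  shows "box_cutoff p q n x = 0"
proof -
  obtain i where "i \<in> Basis" "\<not> (p \<bullet> i + 1 / Suc n \<le> x \<bullet> i \<and> x \<bullet> i \<le> q \<bullet> i - 1 / Suc n)"
    using assms by (auto simp: mem_box inner_simps)
  then have "box_bump p q (1 / Suc n) x = 0"
    by (intro box_bump_eq_0) auto
  then show ?thesis by (simp add: box_cutoff_def)
qed

lemma cbox_shrink_subset_box: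
  fixes p q :: "'a::euclidean_space"
  assumes "e > 0"
  shows "cbox (p + e *\<^sub>R One) (q - e *\<^sub>R One) \<subseteq> box p q"
  using assms by (simp add: subset_box inner_simps)

lemma box_cutoff_tendsto_1:
  assumes "x \<in> box p q"
  shows "(\<lambda>n. box_cutoff p q n x) \<longlonglongrightarrow> 1"
proof -
  define m where "m = Min ((\<lambda>i. x \<bullet> i - p \<bullet> i) ` Basis \<union> (\<lambda>i. q \<bullet> i - x \<bullet> i) ` Basis)"
  have "m > 0"
    using assms unfolding m_def by (subst Min_gr_iff) (auto simp: mem_box)
  then obtain N where N: "1 / real (Suc N) < m"
    using nat_approx_posE by blast
  have m_le: "m \<le> x \<bullet> i - p \<bullet> i" "m \<le> q \<bullet> i - x \<bullet> i" if "i \<in> Basis" for i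
    unfolding m_def using that by (auto intro!: Min_le)
  define c where "c = box_bump p q (1 / Suc N) x"
  have "c > 0"
    unfolding c_def box_bump_pos_iff using m_le N by (smt (verit))
  have "(\<lambda>n. (1 - c) ^ n) \<longlonglongrightarrow> 0"
    using \<open>c > 0\<close> box_bump_le_1[of p q _ x] by (intro LIMSEQ_power_zero) (auto simp: c_def)
  moreover have "\<forall>\<^sub>F n in sequentially. (1 - box_bump p q (1 / Suc n) x) ^ n \<le> (1 - c) ^ n"
  proof (rule eventually_sequentiallyI)
    fix n assume "N \<le> n"
    then have "c \<le> box_bump p q (1 / Suc n) x"
      unfolding c_def by (intro box_bump_antimono) (simp add: frac_le)
    then show "(1 - box_bump p q (1 / Suc n) x) ^ n \<le> (1 - c) ^ n"
      using box_bump_le_1[of p q "1 / Suc n" x] by (intro power_mono) auto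
  qed
  moreover have "\<forall>\<^sub>F n in sequentially. 0 \<le> (1 - box_bump p q (1 / Suc n) x) ^ n"
    using box_bump_le_1[of p q _ x] by (simp add: always_eventually)
  ultimately have "(\<lambda>n. (1 - box_bump p q (1 / Suc n) x) ^ n) \<longlonglongrightarrow> 0"
    using tendsto_sandwich[of "\<lambda>_. 0" _ sequentially "\<lambda>n. (1 - c) ^ n" 0] by simp
  then have "(\<lambda>n. box_cutoff p q n x) \<longlonglongrightarrow> 1 - 0"
    unfolding box_cutoff_def by (intro tendsto_diff tendsto_const)
  then show ?thesis by simp
qed

lemma box_cutoff_tendsto_indicator: "(\<lambda>n. box_cutoff p q n x) \<longlonglongrightarrow> indicator (box p q) x"
proof (cases "x \<in> box p q")
  case False
  then have "box_cutoff p q n x = 0" for n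
    using cbox_shrink_subset_box[of "1 / Suc n" p q] by (intro box_cutoff_eq_0) auto
  then show ?thesis using False by simp
qed (simp add: box_cutoff_tendsto_1)

section \<open>Test functions\<close>

lemma bounded_if_compact_support:
  fixes f :: "'a::euclidean_space \<Rightarrow> real"
  assumes "continuous_on UNIV f" "compact K" "\<And>x. x \<notin> K \<Longrightarrow> f x = 0"
  obtains M where "\<And>x. \<bar>f x\<bar> \<le> M"
proof -
  have "compact (f ` K)"
    using assms by (intro compact_continuous_image) (auto intro: continuous_on_subset)
  then obtain M where M: "\<And>y. y \<in> f ` K \<Longrightarrow> norm y \<le> M"
    using compact_imp_bounded bounded_iff by metis
  have "\<bar>f x\<bar> \<le> max M 0" for x
    using M[of "f x"] assms(3)[of x] by (cases "x \<in> K") auto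
  then show ?thesis using that by blast
qed

lemma integrable_if_compact_support:
  fixes f :: "'a::euclidean_space \<Rightarrow> real"
  assumes "continuous_on UNIV f" "compact K" "\<And>x. x \<notin> K \<Longrightarrow> f x = 0"
  shows "integrable lborel f"
proof -
  have "integrable lborel (\<lambda>x. indicator K x *\<^sub>R f x)"
    using assms by (intro borel_integrable_compact) (auto intro: continuous_on_subset)
  moreover have "(\<lambda>x. indicator K x *\<^sub>R f x) = f"
    using assms(3) by (auto simp: indicator_def fun_eq_iff)
  ultimately show ?thesis by simp
qed

lemma test_funE:
  assumes "test_fun \<Omega> \<theta>"
  obtains K where "compact K" "K \<subseteq> \<Omega>" "\<And>x. x \<notin> K \<Longrightarrow> \<theta> x = 0"
    "continuous_on UNIV \<theta>" "\<And>x. \<theta> differentiable (at x)"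
    "\<And>i. i \<in> Basis \<Longrightarrow> continuous_on UNIV (pderiv \<theta> i)"
    "\<And>i x. x \<notin> K \<Longrightarrow> pderiv \<theta> i x = 0"
proof -
  from assms obtain K where K: "compact K" "K \<subseteq> \<Omega>" "\<And>x. x \<notin> K \<Longrightarrow> \<theta> x = 0"
    and "smooth_fun \<theta>" unfolding test_fun_def by blast
  then have "Ck 1 \<theta>" "Ck 0 \<theta>" unfolding smooth_fun_def by blast+
  moreover have "pderiv \<theta> i x = 0" if "x \<notin> K" for i x
  proof -
    have "open (- K)" using K(1) by (simp add: compact_imp_closed open_Compl)
    then have "(\<theta> has_derivative (\<lambda>_. 0)) (at x)"
      by (rule has_derivative_transform_within_open[OF has_derivative_const])
         (use that K(3) in auto)
    then show ?thesis
      by (simp add: pderiv_def frechet_derivative_at[symmetric])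
  qed
  ultimately show ?thesis using that K by simp
qed

lemma test_fun_zero: "test_fun \<Omega> (\<lambda>x. 0)"
  unfolding test_fun_def by (auto intro!: exI[of _ "{}"] smooth_fun_const)

lemma test_fun_mult:
  assumes "test_fun \<Omega> \<phi>" "smooth_fun \<psi>"
  shows "test_fun \<Omega> (\<lambda>x. \<phi> x * \<psi> x)"
  using assms smooth_fun_mult unfolding test_fun_def by force

lemma test_fun_lin_comb:
  assumes "test_fun \<Omega> \<phi>" "test_fun \<Omega> \<psi>"
  shows "test_fun \<Omega> (\<lambda>x. a * \<phi> x + b * \<psi> x)"
proof -
  obtain K where K: "compact K" "K \<subseteq> \<Omega>" "\<And>x. x \<notin> K \<Longrightarrow> \<phi> x = 0" and "smooth_fun \<phi>"
    using assms(1) unfolding test_fun_def by blast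
  obtain K' where K': "compact K'" "K' \<subseteq> \<Omega>" "\<And>x. x \<notin> K' \<Longrightarrow> \<psi> x = 0" and "smooth_fun \<psi>"
    using assms(2) unfolding test_fun_def by blast
  have "smooth_fun (\<lambda>x. a * \<phi> x + b * \<psi> x)"
    using \<open>smooth_fun \<phi>\<close> \<open>smooth_fun \<psi>\<close> by (intro smooth_fun_add smooth_fun_mult smooth_fun_const)
  moreover have "compact (K \<union> K')" "K \<union> K' \<subseteq> \<Omega>" "\<And>x. x \<notin> K \<union> K' \<Longrightarrow> a * \<phi> x + b * \<psi> x = 0"
    using K K' by auto
  ultimately show ?thesis unfolding test_fun_def by blast
qed

lemma test_fun_box_cutoff:
  assumes "box p q \<subseteq> \<Omega>"
  shows "test_fun \<Omega> (box_cutoff p q n)"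
  unfolding test_fun_def
proof (intro conjI exI)
  show "cbox (p + (1 / Suc n) *\<^sub>R One) (q - (1 / Suc n) *\<^sub>R One) \<subseteq> \<Omega>"
    using cbox_shrink_subset_box[of "1 / Suc n" p q] assms by simp
qed (auto intro: smooth_fun_box_cutoff box_cutoff_eq_0)

lemma has_real_derivative_pderiv_line:
  assumes "\<And>x. \<theta> differentiable (at x)"
  shows "((\<lambda>s. \<theta> (x + s *\<^sub>R i)) has_real_derivative pderiv \<theta> i (x + s *\<^sub>R i)) (at s)"
proof -
  have L: "((\<lambda>s. x + s *\<^sub>R i) has_derivative (\<lambda>h. h *\<^sub>R i)) (at s)"
    by (auto intro!: derivative_eq_intros)
  have D: "(\<theta> has_derivative (\<lambda>h. pderiv \<theta> h (x + s *\<^sub>R i))) (at (x + s *\<^sub>R i))"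
    using has_derivative_pderiv[OF assms] .
  have "((\<lambda>s. \<theta> (x + s *\<^sub>R i)) has_derivative (\<lambda>h. pderiv \<theta> (h *\<^sub>R i) (x + s *\<^sub>R i))) (at s)"
    using has_derivative_compose[OF L D] by (simp add: o_def)
  moreover have "pderiv \<theta> (h *\<^sub>R i) (x + s *\<^sub>R i) = h * pderiv \<theta> i (x + s *\<^sub>R i)" for h
    using linear_scale[OF has_derivative_linear[OF D]] by simp
  ultimately show ?thesis
    by (simp add: has_field_derivative_def mult_commute_abs)
qed

lemma lborel_integral_translate:
  fixes f :: "'a::euclidean_space \<Rightarrow> real"
  assumes "f \<in> borel_measurable lborel"
  shows "integral\<^sup>L lborel (\<lambda>x. f (x + c)) = integral\<^sup>L lborel f"
proof -
  have "integral\<^sup>L lborel f = integral\<^sup>L (distr lborel borel ((+) c)) f"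
    by (simp add: lborel_distr_plus)
  also have "\<dots> = integral\<^sup>L lborel (\<lambda>x. f (c + x))"
    using assms by (intro integral_distr) auto
  finally show ?thesis
    by (simp add: add.commute)
qed

lemma integrable_lborel_translate:
  fixes f :: "'a::euclidean_space \<Rightarrow> real"
  assumes "integrable lborel f"
  shows "integrable lborel (\<lambda>x. f (x + c))"
proof -
  have "integrable (distr lborel borel ((+) c)) f"
    using assms by (simp add: lborel_distr_plus)
  then show ?thesis
    using borel_measurable_integrable[OF assms]
    by (subst (asm) integrable_distr_eq) (auto simp: add.commute)
qed

lemma difference_quotient_le_indicator:
  assumes diff: "\<And>x. \<theta> differentiable (at x)" and M: "\<And>x. \<bar>pderiv \<theta> i x\<bar> \<le> M"
    and K: "\<And>x. x \<notin> K \<Longrightarrow> \<theta> x = 0" and t: "0 < t" "t \<le> 1"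
  shows "\<bar>(\<theta> (x + t *\<^sub>R i) - \<theta> x) / t\<bar> \<le> M * indicator ((\<lambda>(y, s). y - s *\<^sub>R i) ` (K \<times> {0..1})) x"
proof (cases "x \<in> (\<lambda>(y, s). y - s *\<^sub>R i) ` (K \<times> {0..1})")
  case True
  have "\<exists>z>0. z < t \<and> \<theta> (x + t *\<^sub>R i) - \<theta> (x + 0 *\<^sub>R i) = (t - 0) * pderiv \<theta> i (x + z *\<^sub>R i)"
    using t(1) by (intro MVT2) (auto intro: has_real_derivative_pderiv_line[OF diff])
  then obtain z where "\<theta> (x + t *\<^sub>R i) - \<theta> x = t * pderiv \<theta> i (x + z *\<^sub>R i)"
    by auto
  then show ?thesis
    using M[of "x + z *\<^sub>R i"] t True by simp
next
  case False
  then have "x + t *\<^sub>R i \<notin> K" "x \<notin> K"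
    using t by (force intro: image_eqI[where x="(x + t *\<^sub>R i, t)"] image_eqI[where x="(x, 0)"])+
  then show ?thesis
    using K False by simp
qed

text \<open>The difference quotients of \<open>\<theta>\<close> in direction \<open>i\<close> all have integral zero by translation
  invariance, and dominated convergence passes to the derivative.\<close>

lemma integral_pderiv_test_fun:
  assumes \<theta>: "test_fun \<Omega> \<theta>" and i: "i \<in> Basis"
  shows "integral\<^sup>L lborel (pderiv \<theta> i) = 0"
proof -
  obtain K where K: "compact K" "\<And>x. x \<notin> K \<Longrightarrow> \<theta> x = 0"
    and cont: "continuous_on UNIV \<theta>" and diff: "\<And>x. \<theta> differentiable (at x)"
    and pcont: "continuous_on UNIV (pderiv \<theta> i)" and pK: "\<And>x. x \<notin> K \<Longrightarrow> pderiv \<theta> i x = 0"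
    using test_funE[OF \<theta>] i by metis
  obtain M where M: "\<And>x. \<bar>pderiv \<theta> i x\<bar> \<le> M"
    using bounded_if_compact_support[OF pcont K(1) pK] by blast
  define K' where "K' = (\<lambda>(y, s). y - s *\<^sub>R i) ` (K \<times> {0..1::real})"
  have \<theta>_int: "integrable lborel \<theta>"
    by (rule integrable_if_compact_support[OF cont K])
  have \<theta>_meas: "\<theta> \<in> borel_measurable lborel"
    using cont by (simp add: borel_measurable_continuous_onI)
  define D where "D n x = (\<theta> (x + (1 / Suc n) *\<^sub>R i) - \<theta> x) / (1 / Suc n)" for n x
  have "integral\<^sup>L lborel (D n) = 0" for n
    unfolding D_def using \<theta>_int integrable_lborel_translate[OF \<theta>_int]
    by (simp add: lborel_integral_translate[OF \<theta>_meas])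
  moreover have "(\<lambda>n. integral\<^sup>L lborel (D n)) \<longlonglongrightarrow> integral\<^sup>L lborel (pderiv \<theta> i)"
  proof (rule integral_dominated_convergence[where w="\<lambda>x. M * indicator K' x"])
    show "pderiv \<theta> i \<in> borel_measurable lborel"
      using pcont by (simp add: borel_measurable_continuous_onI)
    show "D n \<in> borel_measurable lborel" for n
      unfolding D_def using \<theta>_meas by measurable
    have "compact K'"
      unfolding K'_def
      by (intro compact_continuous_image compact_Times K(1) compact_Icc)
         (auto intro!: continuous_intros simp: case_prod_unfold)
    then show "integrable lborel (\<lambda>x. M * indicator K' x)"
      by (intro integrable_mult_right integrable_real_indicator emeasure_compact_finite)
         (auto intro: borel_compact)
    have "((\<lambda>s. (\<theta> (x + s *\<^sub>R i) - \<theta> x) / s) \<longlongrightarrow> pderiv \<theta> i x) (at 0)" for x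
      using has_real_derivative_pderiv_line[OF diff, of x i 0] by (simp add: has_field_derivative_iff)
    moreover have "filterlim (\<lambda>n. 1 / real (Suc n)) (at 0) sequentially"
      unfolding filterlim_at using LIMSEQ_inverse_real_of_nat by (simp add: inverse_eq_divide)
    ultimately show "AE x in lborel. (\<lambda>n. D n x) \<longlonglongrightarrow> pderiv \<theta> i x"
      unfolding D_def using filterlim_compose by fastforce
    show "AE x in lborel. norm (D n x) \<le> M * indicator K' x" for n
      using difference_quotient_le_indicator[OF diff M K(2), where t="1 / Suc n"]
      unfolding D_def K'_def by (intro AE_I2) simp
  qed
  ultimately show ?thesis
    using LIMSEQ_unique[OF _ tendsto_const] by simp
qed

section \<open>The fundamental lemma of the calculus of variations\<close>

lemma emeasure_density_ennreal_box:
  fixes h :: "'a::euclidean_space \<Rightarrow> real"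
  assumes "integrable lborel h"
  shows "emeasure (density lborel (\<lambda>x. ennreal (h x))) (box l u)
       = ennreal (integral\<^sup>L lborel (\<lambda>x. max 0 (h x) * indicator (box l u) x))"
proof -
  have "emeasure (density lborel (\<lambda>x. ennreal (h x))) (box l u)
      = (\<integral>\<^sup>+ x. ennreal (max 0 (h x) * indicator (box l u) x) \<partial>lborel)"
    using borel_measurable_integrable[OF assms]
    by (simp add: emeasure_density) (intro nn_integral_cong, auto simp: indicator_def max_def ennreal_neg)
  also have "\<dots> = ennreal (integral\<^sup>L lborel (\<lambda>x. max 0 (h x) * indicator (box l u) x))"
    using assms
    by (intro nn_integral_eq_integral integrable_real_mult_indicator Bochner_Integration.integrable_max)
       auto
  finally show ?thesis .
qed

text \<open>The densities of the positive and the negative part of \<open>g\<close> agree on boxes, an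
  intersection-stable generator of the Borel sets, hence they are equal.\<close>

lemma AE_eq_0_if_box_integrals_eq_0:
  fixes g :: "'a::euclidean_space \<Rightarrow> real"
  assumes g_int: "integrable lborel g"
    and box_0: "\<And>l u. integral\<^sup>L lborel (\<lambda>x. indicator (box l u) x * g x) = 0"
  shows "AE x in lborel. g x = 0"
proof -
  let ?p = "\<lambda>x. ennreal (g x)" and ?n = "\<lambda>x. ennreal (- g x)"
  have p_meas: "?p \<in> borel_measurable lborel" and n_meas: "?n \<in> borel_measurable lborel"
    using borel_measurable_integrable[OF g_int] by auto
  have p_fin: "(\<integral>\<^sup>+ x. ?p x \<partial>lborel) < \<infinity>"
  proof -
    have "(\<integral>\<^sup>+ x. ?p x \<partial>lborel) \<le> (\<integral>\<^sup>+ x. ennreal (norm (g x)) \<partial>lborel)"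
      by (intro nn_integral_mono ennreal_leI) simp
    also have "\<dots> < \<infinity>"
      using g_int by (simp add: integrable_iff_bounded)
    finally show ?thesis .
  qed
  have "emeasure (density lborel ?p) (box l u) = emeasure (density lborel ?n) (box l u)" for l u
  proof -
    have "integrable lborel (\<lambda>x. max 0 (g x) * indicator (box l u) x)"
      and "integrable lborel (\<lambda>x. max 0 (- g x) * indicator (box l u) x)"
      using g_int by (auto intro!: integrable_real_mult_indicator Bochner_Integration.integrable_max)
    then have "integral\<^sup>L lborel (\<lambda>x. max 0 (g x) * indicator (box l u) x)
          - integral\<^sup>L lborel (\<lambda>x. max 0 (- g x) * indicator (box l u) x)
        = integral\<^sup>L lborel (\<lambda>x. max 0 (g x) * indicator (box l u) x - max 0 (- g x) * indicator (box l u) x)"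
      by simp
    also have "\<dots> = integral\<^sup>L lborel (\<lambda>x. indicator (box l u) x * g x)"
      by (intro Bochner_Integration.integral_cong) (auto simp: indicator_def max_def)
    finally show ?thesis
      using box_0 emeasure_density_ennreal_box[OF g_int] emeasure_density_ennreal_box[of "\<lambda>x. - g x"] g_int
      by simp
  qed
  then have "density lborel ?p = density lborel ?n"
  proof (intro measure_eqI_generator_eq[where E="range (\<lambda>(a, b). box a b)" and \<Omega>=UNIV
        and A="\<lambda>n::nat. box (- (real n *\<^sub>R One)) (real n *\<^sub>R One)"])
    show "Int_stable (range (\<lambda>(a, b). box a b::'a set))"
      by (auto simp: Int_stable_def box_Int_box)
    show "sets (density lborel ?p) = sigma_sets UNIV (range (\<lambda>(a, b). box a b))"
      and "sets (density lborel ?n) = sigma_sets UNIV (range (\<lambda>(a, b). box a b))"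
      by (simp_all add: borel_eq_box)
    show "(\<Union>n::nat. box (- (real n *\<^sub>R One)) (real n *\<^sub>R One) :: 'a set) = UNIV"
      unfolding UN_box_eq_UNIV by auto
    fix n :: nat
    have "emeasure (density lborel ?p) (box (- (real n *\<^sub>R One)) (real n *\<^sub>R One))
        \<le> emeasure (density lborel ?p) UNIV"
      by (intro emeasure_mono) auto
    also have "\<dots> < \<infinity>"
      using p_meas p_fin by (simp add: emeasure_density)
    finally show "emeasure (density lborel ?p) (box (- (real n *\<^sub>R One)) (real n *\<^sub>R One)) \<noteq> \<infinity>"
      by simp
  qed auto
  then have "AE x in lborel. ?p x = ?n x"
    using finite_density_unique[OF p_meas n_meas] p_fin by auto
  then show ?thesis
    by (rule AE_mp[OF _ AE_I2]) (metis ennreal_eq_0_iff ennreal_neg linorder_le_cases neg_le_0_iff_le order_antisym)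
qed

lemma AE_lebesgue_eq_0_if_box_integrals_eq_0:
  fixes g :: "'a::euclidean_space \<Rightarrow> real"
  assumes g_int: "integrable lebesgue g"
    and box_0: "\<And>l u. integral\<^sup>L lebesgue (\<lambda>x. indicator (box l u) x * g x) = 0"
  shows "AE x in lebesgue. g x = 0"
proof -
  have g_meas: "g \<in> borel_measurable lebesgue"
    using g_int by (rule borel_measurable_integrable)
  obtain g' where g'_meas: "g' \<in> borel_measurable lborel" and "AE x in lborel. g x = g' x"
    using completion_ex_borel_measurable_real[OF g_meas] by blast
  then have g_g': "AE x in lebesgue. g x = g' x"
    using AE_completion by blast
  have "integrable lebesgue g'"
    by (rule integrable_cong_AE_imp[OF g_int measurable_completion[OF g'_meas] g_g'])
  then have "integrable lborel g'"
    using integrable_completion[OF g'_meas] by simp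
  moreover have "integral\<^sup>L lborel (\<lambda>x. indicator (box l u) x * g' x) = 0" for l u
  proof -
    have "integral\<^sup>L lborel (\<lambda>x. indicator (box l u) x * g' x)
        = integral\<^sup>L lebesgue (\<lambda>x. indicator (box l u) x * g' x)"
      using g'_meas by (intro integral_completion[symmetric]) auto
    also have "\<dots> = integral\<^sup>L lebesgue (\<lambda>x. indicator (box l u) x * g x)"
    proof (rule integral_cong_AE)
      show "(\<lambda>x. indicator (box l u) x * g' x) \<in> borel_measurable lebesgue"
        by (intro borel_measurable_times borel_measurable_indicator measurable_completion[OF g'_meas])
           simp
      show "(\<lambda>x. indicator (box l u) x * g x) \<in> borel_measurable lebesgue"
        by (intro borel_measurable_times borel_measurable_indicator g_meas) simp
      show "AE x in lebesgue. indicator (box l u) x * g' x = indicator (box l u) x * g x"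
        using g_g' by eventually_elim simp
    qed
    finally show ?thesis using box_0 by simp
  qed
  ultimately have "AE x in lborel. g' x = 0"
    by (rule AE_eq_0_if_box_integrals_eq_0)
  then have "AE x in lebesgue. g' x = 0"
    by (rule AE_completion)
  with g_g' show ?thesis by eventually_elim simp
qed

lemma AE_eq_0_on_open_if_box_integrals_eq_0:
  fixes F :: "'a::euclidean_space \<Rightarrow> real"
  assumes \<Omega>: "open \<Omega>" and F_int: "integrable (lebesgue_on \<Omega>) F"
    and box_0: "\<And>p q. box p q \<subseteq> \<Omega> \<Longrightarrow> integral\<^sup>L (lebesgue_on \<Omega>) (\<lambda>x. indicator (box p q) x * F x) = 0"
  shows "AE x in lebesgue_on \<Omega>. F x = 0"
proof -
  have \<Omega>_sets: "\<Omega> \<inter> space lebesgue \<in> sets lebesgue"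
    using \<Omega> by (simp add: borel_open)
  have "integrable lebesgue (\<lambda>x. indicator \<Omega> x * F x)"
    using F_int unfolding integrable_restrict_space[OF \<Omega>_sets] by simp
  have on_box: "AE x in lebesgue. x \<in> B \<longrightarrow> F x = 0" if B: "B = box a b" "B \<subseteq> \<Omega>" for B a b
  proof -
    have "AE x in lebesgue. indicator B x * (indicator \<Omega> x * F x) = 0"
    proof (rule AE_lebesgue_eq_0_if_box_integrals_eq_0)
      show "integrable lebesgue (\<lambda>x. indicator B x * (indicator \<Omega> x * F x))"
        using integrable_mult_indicator[of B lebesgue "\<lambda>x. indicator \<Omega> x * F x"]
          \<open>integrable lebesgue (\<lambda>x. indicator \<Omega> x * F x)\<close> B by simp
      fix l u
      obtain c d where cd: "box l u \<inter> B = box c d"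
        using B box_Int_box by blast
      have "integral\<^sup>L lebesgue (\<lambda>x. indicator (box l u) x * (indicator B x * (indicator \<Omega> x * F x)))
          = integral\<^sup>L lebesgue (\<lambda>x. indicator \<Omega> x *\<^sub>R (indicator (box c d) x * F x))"
        unfolding cd[symmetric]
        by (intro Bochner_Integration.integral_cong) (auto simp: indicator_def)
      also have "\<dots> = integral\<^sup>L (lebesgue_on \<Omega>) (\<lambda>x. indicator (box c d) x * F x)"
        by (rule integral_restrict_space[OF \<Omega>_sets, symmetric])
      also have "\<dots> = 0"
        using B cd by (intro box_0) auto
      finally show "integral\<^sup>L lebesgue (\<lambda>x. indicator (box l u) x * (indicator B x * (indicator \<Omega> x * F x))) = 0" .
    qed
    then show ?thesis
      by eventually_elim (use B in \<open>auto simp: indicator_def split: if_splits\<close>)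
  qed
  obtain \<D> where \<D>: "countable \<D>" "\<D> \<subseteq> Pow \<Omega>" "\<And>X. X \<in> \<D> \<Longrightarrow> \<exists>a b. X = box a b" "\<Union>\<D> = \<Omega>"
    using open_countable_Union_open_box[OF \<Omega>] by metis
  have "\<forall>B\<in>\<D>. AE x in lebesgue. x \<in> B \<longrightarrow> F x = 0"
    using \<D>(2,3) on_box by blast
  then have "AE x in lebesgue. \<forall>B\<in>\<D>. x \<in> B \<longrightarrow> F x = 0"
    using AE_ball_countable[OF \<D>(1), of "\<lambda>x B. x \<in> B \<longrightarrow> F x = 0" lebesgue] by blast
  then have "AE x in lebesgue. x \<in> \<Omega> \<longrightarrow> F x = 0"
    by eventually_elim (use \<D>(4) in auto)
  then show ?thesis
    using AE_restrict_space_iff[OF \<Omega>_sets] by simp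
qed

lemma box_integral_eq_0_if_test_integrals_eq_0:
  fixes F :: "'a::euclidean_space \<Rightarrow> real"
  assumes \<Omega>: "open \<Omega>" and F_int: "integrable (lebesgue_on \<Omega>) F"
    and test_0: "\<And>\<phi>. test_fun \<Omega> \<phi> \<Longrightarrow> integral\<^sup>L (lebesgue_on \<Omega>) (\<lambda>x. F x * \<phi> x) = 0"
    and box: "box p q \<subseteq> \<Omega>"
  shows "integral\<^sup>L (lebesgue_on \<Omega>) (\<lambda>x. indicator (box p q) x * F x) = 0"
proof -
  have \<Omega>_sets: "\<Omega> \<in> sets lebesgue"
    using \<Omega> by (simp add: borel_open)
  have F_meas: "F \<in> borel_measurable (lebesgue_on \<Omega>)"
    using F_int by (rule borel_measurable_integrable)
  have "(\<lambda>n. integral\<^sup>L (lebesgue_on \<Omega>) (\<lambda>x. F x * box_cutoff p q n x))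
      \<longlonglongrightarrow> integral\<^sup>L (lebesgue_on \<Omega>) (\<lambda>x. F x * indicator (box p q) x)"
  proof (rule integral_dominated_convergence[where w="\<lambda>x. norm (F x)"])
    show "(\<lambda>x. F x * indicator (box p q) x) \<in> borel_measurable (lebesgue_on \<Omega>)"
      using F_meas box \<Omega>_sets
      by (intro borel_measurable_times borel_measurable_indicator) (auto simp: sets_restrict_space_iff)
    show "(\<lambda>x. F x * box_cutoff p q n x) \<in> borel_measurable (lebesgue_on \<Omega>)" for n
      using F_meas continuous_imp_measurable_on_sets_lebesgue[OF
          smooth_fun_imp_continuous_on[OF smooth_fun_box_cutoff] \<Omega>_sets]
      by (intro borel_measurable_times)
    show "integrable (lebesgue_on \<Omega>) (\<lambda>x. norm (F x))"
      using F_int by simp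
    show "AE x in lebesgue_on \<Omega>. (\<lambda>n. F x * box_cutoff p q n x) \<longlonglongrightarrow> F x * indicator (box p q) x"
      by (intro AE_I2 tendsto_mult tendsto_const box_cutoff_tendsto_indicator)
    show "AE x in lebesgue_on \<Omega>. norm (F x * box_cutoff p q n x) \<le> norm (F x)" for n
      using box_cutoff_nonneg[of p q n] box_cutoff_le_1[of p q n]
      by (intro AE_I2) (auto simp: abs_mult intro: mult_left_le)
  qed
  moreover have "integral\<^sup>L (lebesgue_on \<Omega>) (\<lambda>x. F x * box_cutoff p q n x) = 0" for n
    using test_0 test_fun_box_cutoff[OF box] by blast
  ultimately show ?thesis
    using LIMSEQ_unique[OF _ tendsto_const] by (simp add: mult.commute)
qed

theorem fundamental_lemma_calculus_of_variations:
  fixes F :: "'a::euclidean_space \<Rightarrow> real"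
  assumes "open \<Omega>" "integrable (lebesgue_on \<Omega>) F"
    and "\<And>\<phi>. test_fun \<Omega> \<phi> \<Longrightarrow> integral\<^sup>L (lebesgue_on \<Omega>) (\<lambda>x. F x * \<phi> x) = 0"
  shows "AE x in lebesgue_on \<Omega>. F x = 0"
  using assms
  by (intro AE_eq_0_on_open_if_box_integrals_eq_0 box_integral_eq_0_if_test_integrals_eq_0)

section \<open>Sobolev spaces\<close>

lemma integrable_mult_bounded:
  fixes f g :: "'b \<Rightarrow> real"
  assumes "integrable M f" "g \<in> borel_measurable M" "\<And>x. \<bar>g x\<bar> \<le> C"
  shows "integrable M (\<lambda>x. f x * g x)"
proof (rule Bochner_Integration.integrable_bound[of _ "\<lambda>x. C * f x"])
  show "integrable M (\<lambda>x. C * f x)" using assms(1) by simp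
  show "(\<lambda>x. f x * g x) \<in> borel_measurable M"
    using borel_measurable_integrable[OF assms(1)] assms(2) by measurable
  have "\<bar>f x\<bar> * \<bar>g x\<bar> \<le> \<bar>f x\<bar> * \<bar>C\<bar>" for x
    using assms(3)[of x] by (intro mult_left_mono) auto
  then show "AE x in M. norm (f x * g x) \<le> norm (C * f x)"
    by (intro AE_I2) (simp add: abs_mult mult.commute)
qed

lemma integrable_norm_sq_lin_comb:
  fixes f g :: "'b \<Rightarrow> 'c::euclidean_space"
  assumes "f \<in> borel_measurable M" "g \<in> borel_measurable M"
    and "integrable M (\<lambda>x. (norm (f x))\<^sup>2)" "integrable M (\<lambda>x. (norm (g x))\<^sup>2)"
  shows "integrable M (\<lambda>x. (norm (a *\<^sub>R f x + b *\<^sub>R g x))\<^sup>2)"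
proof (rule Bochner_Integration.integrable_bound)
  show "integrable M (\<lambda>x. 2 * a\<^sup>2 * (norm (f x))\<^sup>2 + 2 * b\<^sup>2 * (norm (g x))\<^sup>2)"
    using assms(3,4) by simp
  show "(\<lambda>x. (norm (a *\<^sub>R f x + b *\<^sub>R g x))\<^sup>2) \<in> borel_measurable M"
    using assms(1,2) by measurable
  have "(norm (a *\<^sub>R f x + b *\<^sub>R g x))\<^sup>2 \<le> 2 * a\<^sup>2 * (norm (f x))\<^sup>2 + 2 * b\<^sup>2 * (norm (g x))\<^sup>2" for x
  proof -
    have "(norm (a *\<^sub>R f x + b *\<^sub>R g x))\<^sup>2 \<le> (\<bar>a\<bar> * norm (f x) + \<bar>b\<bar> * norm (g x))\<^sup>2"
      using norm_triangle_ineq[of "a *\<^sub>R f x" "b *\<^sub>R g x"] by (intro power_mono) auto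
    also have "\<dots> \<le> 2 * a\<^sup>2 * (norm (f x))\<^sup>2 + 2 * b\<^sup>2 * (norm (g x))\<^sup>2"
      using sum_squares_bound[of "\<bar>a\<bar> * norm (f x)" "\<bar>b\<bar> * norm (g x)"]
      by (simp add: power2_sum power_mult_distrib)
    finally show ?thesis .
  qed
  then show "AE x in M. norm ((norm (a *\<^sub>R f x + b *\<^sub>R g x))\<^sup>2)
      \<le> norm (2 * a\<^sup>2 * (norm (f x))\<^sup>2 + 2 * b\<^sup>2 * (norm (g x))\<^sup>2)"
    by (intro AE_I2) simp
qed

lemma L2_lin_comb: "L2 \<Omega> u \<Longrightarrow> L2 \<Omega> v \<Longrightarrow> L2 \<Omega> (\<lambda>x. a * u x + b * v x)"
  using integrable_norm_sq_lin_comb[of u "lebesgue_on \<Omega>" v a b]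
  by (auto simp: L2_def intro: borel_measurable_add borel_measurable_times)

lemma L2v_lin_comb: "L2v \<Omega> F \<Longrightarrow> L2v \<Omega> G \<Longrightarrow> L2v \<Omega> (\<lambda>x. a *\<^sub>R F x + b *\<^sub>R G x)"
  using integrable_norm_sq_lin_comb[of F "lebesgue_on \<Omega>" G a b]
  by (auto simp: L2v_def intro: borel_measurable_add borel_measurable_scaleR)

lemma integrable_inner_if_norm_sq_integrable:
  fixes F G :: "'b \<Rightarrow> 'c::euclidean_space"
  assumes "F \<in> borel_measurable M" "G \<in> borel_measurable M"
    and "integrable M (\<lambda>x. (norm (F x))\<^sup>2)" "integrable M (\<lambda>x. (norm (G x))\<^sup>2)"
  shows "integrable M (\<lambda>x. F x \<bullet> G x)"
proof (rule Bochner_Integration.integrable_bound[OF Bochner_Integration.integrable_add[OF assms(3,4)]])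
  show "(\<lambda>x. F x \<bullet> G x) \<in> borel_measurable M"
    using assms(1,2) by measurable
  have "\<bar>F x \<bullet> G x\<bar> \<le> (norm (F x))\<^sup>2 + (norm (G x))\<^sup>2" for x
    using Cauchy_Schwarz_ineq2[of "F x" "G x"] sum_squares_bound[of "norm (F x)" "norm (G x)"]
      mult_nonneg_nonneg[OF norm_ge_zero[of "F x"] norm_ge_zero[of "G x"]] by linarith
  then show "AE x in M. norm (F x \<bullet> G x) \<le> norm ((norm (F x))\<^sup>2 + (norm (G x))\<^sup>2)"
    by (intro AE_I2) simp
qed

lemma le_sqrt_mult_if_quadratic_nonneg:
  fixes A B C :: real
  assumes "\<And>t. 0 \<le> A - 2 * t * C + t\<^sup>2 * B" "0 \<le> A" "0 \<le> B"
  shows "C \<le> sqrt A * sqrt B"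
proof -
  have "C\<^sup>2 \<le> A * B"
  proof (cases "B = 0")
    case True
    have "C = 0"
    proof (rule ccontr)
      assume "C \<noteq> 0"
      then have "A - 2 * ((A + 1) / (2 * C)) * C = -1" by (simp add: field_simps)
      with assms(1)[of "(A + 1) / (2 * C)"] True show False by simp
    qed
    then show ?thesis using True by simp
  next
    case False
    with assms(3) have "B > 0" by simp
    have "0 \<le> A - 2 * (C / B) * C + (C / B)\<^sup>2 * B" by (rule assms(1))
    also have "\<dots> = (A * B - C\<^sup>2) / B"
      using \<open>B > 0\<close> by (simp add: field_simps power2_eq_square)
    finally show ?thesis using \<open>B > 0\<close> by (simp add: zero_le_divide_iff)
  qed
  then show ?thesis
    using real_sqrt_le_mono[of "C\<^sup>2" "A * B"] by (simp add: real_sqrt_mult)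
qed

lemma minkowski_L2_pair:
  fixes f g :: "'b \<Rightarrow> real" and F G :: "'b \<Rightarrow> 'c::euclidean_space"
  assumes meas: "f \<in> borel_measurable M" "g \<in> borel_measurable M"
      "F \<in> borel_measurable M" "G \<in> borel_measurable M"
    and int: "integrable M (\<lambda>x. (f x)\<^sup>2)" "integrable M (\<lambda>x. (g x)\<^sup>2)"
      "integrable M (\<lambda>x. (norm (F x))\<^sup>2)" "integrable M (\<lambda>x. (norm (G x))\<^sup>2)"
  shows "sqrt (integral\<^sup>L M (\<lambda>x. (f x + g x)\<^sup>2) + integral\<^sup>L M (\<lambda>x. (norm (F x + G x))\<^sup>2))
     \<le> sqrt (integral\<^sup>L M (\<lambda>x. (f x)\<^sup>2) + integral\<^sup>L M (\<lambda>x. (norm (F x))\<^sup>2))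
       + sqrt (integral\<^sup>L M (\<lambda>x. (g x)\<^sup>2) + integral\<^sup>L M (\<lambda>x. (norm (G x))\<^sup>2))"
proof -
  define A where "A = integral\<^sup>L M (\<lambda>x. (f x)\<^sup>2) + integral\<^sup>L M (\<lambda>x. (norm (F x))\<^sup>2)"
  define B where "B = integral\<^sup>L M (\<lambda>x. (g x)\<^sup>2) + integral\<^sup>L M (\<lambda>x. (norm (G x))\<^sup>2)"
  define C where "C = integral\<^sup>L M (\<lambda>x. f x * g x) + integral\<^sup>L M (\<lambda>x. F x \<bullet> G x)"
  have FG_int: "integrable M (\<lambda>x. F x \<bullet> G x)"
    using meas int by (intro integrable_inner_if_norm_sq_integrable)
  have fg_int: "integrable M (\<lambda>x. f x * g x)"
    using integrable_inner_if_norm_sq_integrable[of f M g] meas int by simp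
  have expand: "integral\<^sup>L M (\<lambda>x. (f x + t * g x)\<^sup>2) + integral\<^sup>L M (\<lambda>x. (norm (F x + t *\<^sub>R G x))\<^sup>2)
      = A + 2 * t * C + t\<^sup>2 * B" for t
  proof -
    have eq_f: "(f x + t * g x)\<^sup>2 = (f x)\<^sup>2 + (2 * t) * (f x * g x) + t\<^sup>2 * (g x)\<^sup>2" for x
      by (simp add: power2_eq_square algebra_simps)
    have eq_F: "(norm (F x + t *\<^sub>R G x))\<^sup>2
        = (norm (F x))\<^sup>2 + (2 * t) * (F x \<bullet> G x) + t\<^sup>2 * (norm (G x))\<^sup>2" for x
      unfolding power2_norm_eq_inner
      by (simp add: inner_add_left inner_add_right inner_commute algebra_simps power2_eq_square)
    show ?thesis
      using int fg_int FG_int by (simp only: eq_f eq_F) (simp add: A_def B_def C_def; simp add: algebra_simps)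
  qed
  have "0 \<le> A" "0 \<le> B"
    unfolding A_def B_def by (intro add_nonneg_nonneg integral_nonneg_AE; simp)+
  moreover have "0 \<le> A - 2 * t * C + t\<^sup>2 * B" for t
  proof -
    have "0 \<le> integral\<^sup>L M (\<lambda>x. (f x + (- t) * g x)\<^sup>2)
              + integral\<^sup>L M (\<lambda>x. (norm (F x + (- t) *\<^sub>R G x))\<^sup>2)"
      by (intro add_nonneg_nonneg integral_nonneg_AE) auto
    then show ?thesis unfolding expand by simp
  qed
  ultimately have "C \<le> sqrt A * sqrt B"
    using le_sqrt_mult_if_quadratic_nonneg by blast
  then have "integral\<^sup>L M (\<lambda>x. (f x + g x)\<^sup>2) + integral\<^sup>L M (\<lambda>x. (norm (F x + G x))\<^sup>2)
      \<le> (sqrt A + sqrt B)\<^sup>2"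
    using expand[of 1] \<open>0 \<le> A\<close> \<open>0 \<le> B\<close> by (simp add: power2_sum)
  then show ?thesis
    using real_sqrt_le_mono \<open>0 \<le> A\<close> \<open>0 \<le> B\<close> unfolding A_def B_def by fastforce
qed

lemma minkowski_L2_pair_lin_comb:
  fixes f g :: "'b \<Rightarrow> real" and F G :: "'b \<Rightarrow> 'c::euclidean_space"
  assumes meas: "f \<in> borel_measurable M" "g \<in> borel_measurable M"
      "F \<in> borel_measurable M" "G \<in> borel_measurable M"
    and int: "integrable M (\<lambda>x. (f x)\<^sup>2)" "integrable M (\<lambda>x. (g x)\<^sup>2)"
      "integrable M (\<lambda>x. (norm (F x))\<^sup>2)" "integrable M (\<lambda>x. (norm (G x))\<^sup>2)"
  shows "sqrt (integral\<^sup>L M (\<lambda>x. (a * f x + b * g x)\<^sup>2)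
               + integral\<^sup>L M (\<lambda>x. (norm (a *\<^sub>R F x + b *\<^sub>R G x))\<^sup>2))
     \<le> \<bar>a\<bar> * sqrt (integral\<^sup>L M (\<lambda>x. (f x)\<^sup>2) + integral\<^sup>L M (\<lambda>x. (norm (F x))\<^sup>2))
       + \<bar>b\<bar> * sqrt (integral\<^sup>L M (\<lambda>x. (g x)\<^sup>2) + integral\<^sup>L M (\<lambda>x. (norm (G x))\<^sup>2))"
proof -
  have scale: "sqrt (integral\<^sup>L M (\<lambda>x. (c * h x)\<^sup>2) + integral\<^sup>L M (\<lambda>x. (norm (c *\<^sub>R H x))\<^sup>2))
      = \<bar>c\<bar> * sqrt (integral\<^sup>L M (\<lambda>x. (h x)\<^sup>2) + integral\<^sup>L M (\<lambda>x. (norm (H x))\<^sup>2))"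
    for c and h :: "'b \<Rightarrow> real" and H :: "'b \<Rightarrow> 'c"
  proof -
    have "integral\<^sup>L M (\<lambda>x. (c * h x)\<^sup>2) + integral\<^sup>L M (\<lambda>x. (norm (c *\<^sub>R H x))\<^sup>2)
        = c\<^sup>2 * (integral\<^sup>L M (\<lambda>x. (h x)\<^sup>2) + integral\<^sup>L M (\<lambda>x. (norm (H x))\<^sup>2))"
      by (simp add: power_mult_distrib algebra_simps)
    then show ?thesis by (simp add: real_sqrt_mult)
  qed
  have "sqrt (integral\<^sup>L M (\<lambda>x. (a * f x + b * g x)\<^sup>2)
               + integral\<^sup>L M (\<lambda>x. (norm (a *\<^sub>R F x + b *\<^sub>R G x))\<^sup>2))
     \<le> sqrt (integral\<^sup>L M (\<lambda>x. (a * f x)\<^sup>2) + integral\<^sup>L M (\<lambda>x. (norm (a *\<^sub>R F x))\<^sup>2))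
       + sqrt (integral\<^sup>L M (\<lambda>x. (b * g x)\<^sup>2) + integral\<^sup>L M (\<lambda>x. (norm (b *\<^sub>R G x))\<^sup>2))"
    using meas int by (intro minkowski_L2_pair) (auto simp: power_mult_distrib)
  then show ?thesis
    unfolding scale .
qed

lemma H1_norm_nonneg: "0 \<le> H1_norm \<Omega> v"
  and grad_norm_nonneg: "0 \<le> grad_norm \<Omega> v"
  and grad_norm_le_H1_norm: "grad_norm \<Omega> v \<le> H1_norm \<Omega> v"
proof -
  have "0 \<le> integral\<^sup>L (lebesgue_on \<Omega>) (\<lambda>x. (v x)\<^sup>2)"
    and "0 \<le> integral\<^sup>L (lebesgue_on \<Omega>) (\<lambda>x. (norm (wgrad \<Omega> v x))\<^sup>2)"
    by (intro integral_nonneg_AE; simp)+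
  then show "0 \<le> H1_norm \<Omega> v" "0 \<le> grad_norm \<Omega> v" "grad_norm \<Omega> v \<le> H1_norm \<Omega> v"
    unfolding H1_norm_def grad_norm_def by simp_all
qed

lemma wgrad:
  assumes "v \<in> H1 \<Omega>"
  shows "L2v \<Omega> (wgrad \<Omega> v)" "weak_grad \<Omega> v (wgrad \<Omega> v)"
proof -
  have "\<exists>G. L2v \<Omega> G \<and> weak_grad \<Omega> v G"
    using assms unfolding H1_def by blast
  then have "L2v \<Omega> (wgrad \<Omega> v) \<and> weak_grad \<Omega> v (wgrad \<Omega> v)"
    unfolding wgrad_def by (rule someI_ex)
  then show "L2v \<Omega> (wgrad \<Omega> v)" "weak_grad \<Omega> v (wgrad \<Omega> v)"
    by blast+
qed

lemma
  assumes "u \<in> H1 \<Omega>" "(\<lambda>x. 0) \<in> H10 \<Omega>"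
  shows trace_norm_nonneg: "0 \<le> trace_norm \<Omega> u"
    and trace_norm_le_H1_norm: "trace_norm \<Omega> u \<le> H1_norm \<Omega> u"
proof -
  let ?S = "{H1_norm \<Omega> v | v. v \<in> H1 \<Omega> \<and> (\<lambda>x. v x - u x) \<in> H10 \<Omega>}"
  have "H1_norm \<Omega> u \<in> ?S" using assms by auto
  moreover have "bdd_below ?S"
    by (rule bdd_belowI[of _ 0]) (auto simp: H1_norm_nonneg)
  ultimately show "0 \<le> trace_norm \<Omega> u" "trace_norm \<Omega> u \<le> H1_norm \<Omega> u"
    unfolding trace_norm_def by (auto intro!: cInf_greatest cInf_lower simp: H1_norm_nonneg)
qed

lemma le_mult_trace_norm:
  assumes "u \<in> H1 \<Omega>" "(\<lambda>x. 0) \<in> H10 \<Omega>" "0 \<le> K"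
    and bound: "\<And>v. v \<in> H1 \<Omega> \<Longrightarrow> (\<lambda>x. v x - u x) \<in> H10 \<Omega> \<Longrightarrow> c \<le> K * H1_norm \<Omega> v"
  shows "c \<le> K * trace_norm \<Omega> u"
proof (cases "K = 0")
  case True
  then show ?thesis using bound[of u] assms(1,2) by simp
next
  case False
  with \<open>0 \<le> K\<close> have "K > 0" by simp
  have "c / K \<le> trace_norm \<Omega> u"
    unfolding trace_norm_def
  proof (rule cInf_greatest)
    show "{H1_norm \<Omega> v | v. v \<in> H1 \<Omega> \<and> (\<lambda>x. v x - u x) \<in> H10 \<Omega>} \<noteq> {}"
      using assms(1,2) by auto
  next
    fix y assume "y \<in> {H1_norm \<Omega> v | v. v \<in> H1 \<Omega> \<and> (\<lambda>x. v x - u x) \<in> H10 \<Omega>}"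
    then have "c \<le> K * y"
      using bound by blast
    then show "c / K \<le> y"
      using \<open>K > 0\<close> by (simp add: pos_divide_le_eq mult.commute)
  qed
  then show ?thesis
    using \<open>K > 0\<close> by (simp add: pos_divide_le_eq mult.commute)
qed

definition classical_grad :: "('a::euclidean_space \<Rightarrow> real) \<Rightarrow> 'a \<Rightarrow> 'a" where
  "classical_grad \<phi> x = (\<Sum>i\<in>Basis. pderiv \<phi> i x *\<^sub>R i)"

locale bounded_open_domain =
  fixes \<Omega> :: "'a::euclidean_space set"
  assumes open_domain: "open \<Omega>" and bounded_domain: "bounded \<Omega>"
begin

lemma domain_sets: "\<Omega> \<in> sets lebesgue" "\<Omega> \<inter> space lebesgue \<in> sets lebesgue"
  using open_domain by (simp_all add: borel_open)

lemma continuous_imp_measurable_on_domain: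
  fixes f :: "'a \<Rightarrow> 'b::euclidean_space"
  assumes "continuous_on UNIV f"
  shows "f \<in> borel_measurable (lebesgue_on \<Omega>)"
  using continuous_imp_measurable_on_sets_lebesgue[OF continuous_on_subset[OF assms] domain_sets(1)]
  by simp

lemma integrable_const_on_domain: "integrable (lebesgue_on \<Omega>) (\<lambda>x. c::real)"
proof -
  have "emeasure (lebesgue_on \<Omega>) (space (lebesgue_on \<Omega>)) = emeasure lborel \<Omega>"
    using domain_sets open_domain by (simp add: emeasure_restrict_space)
  also have "\<dots> < \<infinity>"
    using bounded_domain by (rule emeasure_bounded_finite)
  finally show ?thesis
    by (intro finite_measure.integrable_const finite_measureI) simp
qed

lemma L2_imp_integrable:
  assumes "L2 \<Omega> v"
  shows "integrable (lebesgue_on \<Omega>) v"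
proof (rule Bochner_Integration.integrable_bound[of _ "\<lambda>x. 1 + (v x)\<^sup>2"])
  have "\<bar>v x\<bar> \<le> 1 + (v x)\<^sup>2" for x
    using sum_squares_bound[of "\<bar>v x\<bar>" 1] by (simp add: power2_abs)
  then show "AE x in lebesgue_on \<Omega>. norm (v x) \<le> norm (1 + (v x)\<^sup>2)"
    by (intro AE_I2) simp
qed (use assms in \<open>auto simp: L2_def intro: integrable_const_on_domain\<close>)

lemma L2v_imp_integrable_inner:
  assumes "L2v \<Omega> G" "i \<in> Basis"
  shows "integrable (lebesgue_on \<Omega>) (\<lambda>x. G x \<bullet> i)"
proof (rule Bochner_Integration.integrable_bound[of _ "\<lambda>x. 1 + (norm (G x))\<^sup>2"])
  show "integrable (lebesgue_on \<Omega>) (\<lambda>x. 1 + (norm (G x))\<^sup>2)"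
    using assms(1) unfolding L2v_def by (intro Bochner_Integration.integrable_add integrable_const_on_domain) auto
  show "(\<lambda>x. G x \<bullet> i) \<in> borel_measurable (lebesgue_on \<Omega>)"
    using assms(1) unfolding L2v_def by (intro borel_measurable_inner) auto
  have "\<bar>G x \<bullet> i\<bar> \<le> 1 + (norm (G x))\<^sup>2" for x
    using Basis_le_norm[OF assms(2), of "G x"] sum_squares_bound[of "norm (G x)" 1] by simp
  then show "AE x in lebesgue_on \<Omega>. norm (G x \<bullet> i) \<le> norm (1 + (norm (G x))\<^sup>2)"
    by (intro AE_I2) simp
qed

lemma integrable_mult_compact_support:
  fixes g f :: "'a \<Rightarrow> real"
  assumes "integrable (lebesgue_on \<Omega>) g" "continuous_on UNIV f" "compact K" "\<And>x. x \<notin> K \<Longrightarrow> f x = 0"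
  shows "integrable (lebesgue_on \<Omega>) (\<lambda>x. g x * f x)"
proof -
  obtain M where "\<And>x. \<bar>f x\<bar> \<le> M"
    using bounded_if_compact_support[OF assms(2-4)] by blast
  then show ?thesis
    by (rule integrable_mult_bounded[OF assms(1) continuous_imp_measurable_on_domain[OF assms(2)]])
qed

lemma integrable_compact_support_on_domain:
  fixes f :: "'a \<Rightarrow> real"
  assumes "continuous_on UNIV f" "compact K" "\<And>x. x \<notin> K \<Longrightarrow> f x = 0"
  shows "integrable (lebesgue_on \<Omega>) f"
  using integrable_mult_compact_support[OF integrable_const_on_domain[of 1] assms] by simp

lemma integral_pderiv_test_fun_on_domain:
  assumes \<theta>: "test_fun \<Omega> \<theta>" and i: "i \<in> Basis"
  shows "integral\<^sup>L (lebesgue_on \<Omega>) (pderiv \<theta> i) = 0"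
proof -
  obtain K where K: "K \<subseteq> \<Omega>" "\<And>x. x \<notin> K \<Longrightarrow> pderiv \<theta> i x = 0"
    and "continuous_on UNIV (pderiv \<theta> i)"
    using test_funE[OF \<theta>] i by metis
  then have outside: "pderiv \<theta> i x = 0" if "x \<notin> \<Omega>" for x
    using that by blast
  have "integral\<^sup>L (lebesgue_on \<Omega>) (pderiv \<theta> i) = integral\<^sup>L lebesgue (pderiv \<theta> i)"
    by (subst integral_restrict_space[OF domain_sets(2)])
       (auto intro!: Bochner_Integration.integral_cong simp: indicator_def outside)
  also have "\<dots> = integral\<^sup>L lborel (pderiv \<theta> i)"
    using \<open>continuous_on UNIV (pderiv \<theta> i)\<close>
    by (intro integral_completion) (simp add: borel_measurable_continuous_onI)
  also have "\<dots> = 0"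
    by (rule integral_pderiv_test_fun[OF \<theta> i])
  finally show ?thesis .
qed

lemma weak_grad_unique:
  assumes "weak_grad \<Omega> v G1" "weak_grad \<Omega> v G2" "L2v \<Omega> G1" "L2v \<Omega> G2"
  shows "AE x in lebesgue_on \<Omega>. G1 x = G2 x"
proof -
  have "AE x in lebesgue_on \<Omega>. G1 x \<bullet> i - G2 x \<bullet> i = 0" if i: "i \<in> Basis" for i
  proof (rule fundamental_lemma_calculus_of_variations[OF open_domain])
    have G1_int: "integrable (lebesgue_on \<Omega>) (\<lambda>x. G1 x \<bullet> i)"
      and G2_int: "integrable (lebesgue_on \<Omega>) (\<lambda>x. G2 x \<bullet> i)"
      using L2v_imp_integrable_inner[OF assms(3) i] L2v_imp_integrable_inner[OF assms(4) i] .
    then show "integrable (lebesgue_on \<Omega>) (\<lambda>x. G1 x \<bullet> i - G2 x \<bullet> i)"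
      by simp
    fix \<phi> assume \<phi>: "test_fun \<Omega> \<phi>"
    obtain K where K: "compact K" "\<And>x. x \<notin> K \<Longrightarrow> \<phi> x = 0" and "continuous_on UNIV \<phi>"
      using test_funE[OF \<phi>] by metis
    have "integrable (lebesgue_on \<Omega>) (\<lambda>x. G1 x \<bullet> i * \<phi> x)"
      and "integrable (lebesgue_on \<Omega>) (\<lambda>x. G2 x \<bullet> i * \<phi> x)"
      using G1_int G2_int K(2)
      by (intro integrable_mult_compact_support[OF _ \<open>continuous_on UNIV \<phi>\<close> K(1)]; simp)+
    moreover have "integral\<^sup>L (lebesgue_on \<Omega>) (\<lambda>x. v x * pderiv \<phi> i x)
                 = - integral\<^sup>L (lebesgue_on \<Omega>) (\<lambda>x. G1 x \<bullet> i * \<phi> x)"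
      and "integral\<^sup>L (lebesgue_on \<Omega>) (\<lambda>x. v x * pderiv \<phi> i x)
                 = - integral\<^sup>L (lebesgue_on \<Omega>) (\<lambda>x. G2 x \<bullet> i * \<phi> x)"
      using assms(1,2) \<phi> i unfolding weak_grad_def by blast+
    ultimately show "integral\<^sup>L (lebesgue_on \<Omega>) (\<lambda>x. (G1 x \<bullet> i - G2 x \<bullet> i) * \<phi> x) = 0"
      by (simp add: left_diff_distrib)
  qed
  then have "AE x in lebesgue_on \<Omega>. \<forall>i\<in>Basis. G1 x \<bullet> i - G2 x \<bullet> i = 0"
    by (rule AE_finite_allI[OF finite_Basis])
  then show ?thesis
    by (rule AE_mp[OF _ AE_I2]) (auto intro: euclidean_eqI)
qed

lemma integral_norm_sq_wgrad:
  assumes "v \<in> H1 \<Omega>" "L2v \<Omega> G" "weak_grad \<Omega> v G"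
  shows "integral\<^sup>L (lebesgue_on \<Omega>) (\<lambda>x. (norm (wgrad \<Omega> v x))\<^sup>2)
       = integral\<^sup>L (lebesgue_on \<Omega>) (\<lambda>x. (norm (G x))\<^sup>2)"
proof (rule integral_cong_AE)
  show "(\<lambda>x. (norm (wgrad \<Omega> v x))\<^sup>2) \<in> borel_measurable (lebesgue_on \<Omega>)"
    using wgrad(1)[OF assms(1)] unfolding L2v_def by (blast dest: borel_measurable_integrable)
  show "(\<lambda>x. (norm (G x))\<^sup>2) \<in> borel_measurable (lebesgue_on \<Omega>)"
    using assms(2) unfolding L2v_def by (blast dest: borel_measurable_integrable)
  show "AE x in lebesgue_on \<Omega>. (norm (wgrad \<Omega> v x))\<^sup>2 = (norm (G x))\<^sup>2"
    using weak_grad_unique[OF wgrad(2)[OF assms(1)] assms(3) wgrad(1)[OF assms(1)] assms(2)]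
    by (rule AE_mp[OF _ AE_I2]) simp
qed

lemma grad_norm_weak_grad:
  assumes "v \<in> H1 \<Omega>" "L2v \<Omega> G" "weak_grad \<Omega> v G"
  shows "grad_norm \<Omega> v = sqrt (integral\<^sup>L (lebesgue_on \<Omega>) (\<lambda>x. (norm (G x))\<^sup>2))"
  using integral_norm_sq_wgrad[OF assms] by (simp add: grad_norm_def)

lemma H1_norm_weak_grad:
  assumes "v \<in> H1 \<Omega>" "L2v \<Omega> G" "weak_grad \<Omega> v G"
  shows "H1_norm \<Omega> v = sqrt (integral\<^sup>L (lebesgue_on \<Omega>) (\<lambda>x. (v x)\<^sup>2)
                             + integral\<^sup>L (lebesgue_on \<Omega>) (\<lambda>x. (norm (G x))\<^sup>2))"
  using integral_norm_sq_wgrad[OF assms] by (simp add: H1_norm_def)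

lemma weak_grad_lin_comb:
  assumes u: "L2 \<Omega> u" "L2v \<Omega> Gu" "weak_grad \<Omega> u Gu"
    and v: "L2 \<Omega> v" "L2v \<Omega> Gv" "weak_grad \<Omega> v Gv"
  shows "weak_grad \<Omega> (\<lambda>x. a * u x + b * v x) (\<lambda>x. a *\<^sub>R Gu x + b *\<^sub>R Gv x)"
  unfolding weak_grad_def
proof (intro allI impI ballI)
  fix \<phi> and i :: 'a
  assume \<phi>: "test_fun \<Omega> \<phi>" and i: "i \<in> Basis"
  obtain K where K: "compact K" "\<And>x. x \<notin> K \<Longrightarrow> \<phi> x = 0" "\<And>x. x \<notin> K \<Longrightarrow> pderiv \<phi> i x = 0"
    and cont: "continuous_on UNIV \<phi>" "continuous_on UNIV (pderiv \<phi> i)"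
    using test_funE[OF \<phi>] i by metis
  have int_deriv: "integrable (lebesgue_on \<Omega>) (\<lambda>x. w x * pderiv \<phi> i x)"
    if "integrable (lebesgue_on \<Omega>) w" for w
    using that K(3) by (intro integrable_mult_compact_support[OF _ cont(2) K(1)]; simp)
  have int_test: "integrable (lebesgue_on \<Omega>) (\<lambda>x. w x * \<phi> x)"
    if "integrable (lebesgue_on \<Omega>) w" for w
    using that K(2) by (intro integrable_mult_compact_support[OF _ cont(1) K(1)]; simp)
  have eq_u: "integral\<^sup>L (lebesgue_on \<Omega>) (\<lambda>x. u x * pderiv \<phi> i x)
      = - integral\<^sup>L (lebesgue_on \<Omega>) (\<lambda>x. Gu x \<bullet> i * \<phi> x)"
    and eq_v: "integral\<^sup>L (lebesgue_on \<Omega>) (\<lambda>x. v x * pderiv \<phi> i x)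
      = - integral\<^sup>L (lebesgue_on \<Omega>) (\<lambda>x. Gv x \<bullet> i * \<phi> x)"
    using u(3) v(3) \<phi> i unfolding weak_grad_def by blast+
  have "integral\<^sup>L (lebesgue_on \<Omega>) (\<lambda>x. (a * u x + b * v x) * pderiv \<phi> i x)
      = a * integral\<^sup>L (lebesgue_on \<Omega>) (\<lambda>x. u x * pderiv \<phi> i x)
        + b * integral\<^sup>L (lebesgue_on \<Omega>) (\<lambda>x. v x * pderiv \<phi> i x)"
    using int_deriv[OF L2_imp_integrable[OF u(1)]] int_deriv[OF L2_imp_integrable[OF v(1)]]
    by (simp add: distrib_right mult.assoc)
  also have "\<dots> = - (a * integral\<^sup>L (lebesgue_on \<Omega>) (\<lambda>x. Gu x \<bullet> i * \<phi> x)
                    + b * integral\<^sup>L (lebesgue_on \<Omega>) (\<lambda>x. Gv x \<bullet> i * \<phi> x))"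
    unfolding eq_u eq_v by simp
  also have "\<dots> = - integral\<^sup>L (lebesgue_on \<Omega>) (\<lambda>x. (a *\<^sub>R Gu x + b *\<^sub>R Gv x) \<bullet> i * \<phi> x)"
    using int_test[OF L2v_imp_integrable_inner[OF u(2) i]] int_test[OF L2v_imp_integrable_inner[OF v(2) i]]
    by (simp add: inner_add_left distrib_right mult.assoc)
  finally show "integral\<^sup>L (lebesgue_on \<Omega>) (\<lambda>x. (a * u x + b * v x) * pderiv \<phi> i x)
      = - integral\<^sup>L (lebesgue_on \<Omega>) (\<lambda>x. (a *\<^sub>R Gu x + b *\<^sub>R Gv x) \<bullet> i * \<phi> x)" .
qed

lemma H1_lin_comb:
  assumes "u \<in> H1 \<Omega>" "v \<in> H1 \<Omega>"
  shows "(\<lambda>x. a * u x + b * v x) \<in> H1 \<Omega>"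
proof -
  have "L2 \<Omega> u" "L2 \<Omega> v" using assms by (auto simp: H1_def)
  then show ?thesis
    using L2_lin_comb weak_grad_lin_comb[OF _ wgrad[OF assms(1)] _ wgrad[OF assms(2)]]
      L2v_lin_comb[OF wgrad(1)[OF assms(1)] wgrad(1)[OF assms(2)]]
    unfolding H1_def by blast
qed

lemma H1_norm_lin_comb_le:
  assumes "u \<in> H1 \<Omega>" "v \<in> H1 \<Omega>"
  shows "H1_norm \<Omega> (\<lambda>x. a * u x + b * v x) \<le> \<bar>a\<bar> * H1_norm \<Omega> u + \<bar>b\<bar> * H1_norm \<Omega> v"
proof -
  have L2: "L2 \<Omega> u" "L2 \<Omega> v" using assms by (auto simp: H1_def)
  note Gu = wgrad[OF assms(1)] and Gv = wgrad[OF assms(2)]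
  have "H1_norm \<Omega> (\<lambda>x. a * u x + b * v x)
      = sqrt (integral\<^sup>L (lebesgue_on \<Omega>) (\<lambda>x. (a * u x + b * v x)\<^sup>2)
              + integral\<^sup>L (lebesgue_on \<Omega>) (\<lambda>x. (norm (a *\<^sub>R wgrad \<Omega> u x + b *\<^sub>R wgrad \<Omega> v x))\<^sup>2))"
    by (rule H1_norm_weak_grad[OF H1_lin_comb[OF assms] L2v_lin_comb[OF Gu(1) Gv(1)]
          weak_grad_lin_comb[OF L2(1) Gu L2(2) Gv]])
  also have "\<dots> \<le> \<bar>a\<bar> * H1_norm \<Omega> u + \<bar>b\<bar> * H1_norm \<Omega> v"
    unfolding H1_norm_def
    using L2 Gu(1) Gv(1) by (intro minkowski_L2_pair_lin_comb) (auto simp: L2_def L2v_def)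
  finally show ?thesis .
qed

lemma grad_norm_lin_comb_le:
  assumes "u \<in> H1 \<Omega>" "v \<in> H1 \<Omega>"
  shows "grad_norm \<Omega> (\<lambda>x. a * u x + b * v x) \<le> \<bar>a\<bar> * grad_norm \<Omega> u + \<bar>b\<bar> * grad_norm \<Omega> v"
proof -
  have L2: "L2 \<Omega> u" "L2 \<Omega> v" using assms by (auto simp: H1_def)
  note Gu = wgrad[OF assms(1)] and Gv = wgrad[OF assms(2)]
  have "grad_norm \<Omega> (\<lambda>x. a * u x + b * v x)
      = sqrt (integral\<^sup>L (lebesgue_on \<Omega>) (\<lambda>x. (a * 0 + b * (0::real))\<^sup>2)
              + integral\<^sup>L (lebesgue_on \<Omega>) (\<lambda>x. (norm (a *\<^sub>R wgrad \<Omega> u x + b *\<^sub>R wgrad \<Omega> v x))\<^sup>2))"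
    using grad_norm_weak_grad[OF H1_lin_comb[OF assms] L2v_lin_comb[OF Gu(1) Gv(1)]
          weak_grad_lin_comb[OF L2(1) Gu L2(2) Gv]] by simp
  also have "\<dots> \<le> \<bar>a\<bar> * sqrt (integral\<^sup>L (lebesgue_on \<Omega>) (\<lambda>x. (0::real)\<^sup>2)
                                  + integral\<^sup>L (lebesgue_on \<Omega>) (\<lambda>x. (norm (wgrad \<Omega> u x))\<^sup>2))
                 + \<bar>b\<bar> * sqrt (integral\<^sup>L (lebesgue_on \<Omega>) (\<lambda>x. (0::real)\<^sup>2)
                                  + integral\<^sup>L (lebesgue_on \<Omega>) (\<lambda>x. (norm (wgrad \<Omega> v x))\<^sup>2))"
    using Gu(1) Gv(1) by (intro minkowski_L2_pair_lin_comb) (auto simp: L2v_def)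
  also have "\<dots> = \<bar>a\<bar> * grad_norm \<Omega> u + \<bar>b\<bar> * grad_norm \<Omega> v"
    by (simp add: grad_norm_def)
  finally show ?thesis .
qed

lemma L2_test_fun:
  assumes "test_fun \<Omega> \<phi>"
  shows "L2 \<Omega> \<phi>"
proof -
  obtain K where K: "compact K" "\<And>x. x \<notin> K \<Longrightarrow> \<phi> x = 0" and cont: "continuous_on UNIV \<phi>"
    using test_funE[OF assms] by metis
  have "continuous_on UNIV (\<lambda>x. (\<phi> x)\<^sup>2)"
    using cont by (intro continuous_intros)
  then show ?thesis
    unfolding L2_def using continuous_imp_measurable_on_domain[OF cont] K
    by (simp add: integrable_compact_support_on_domain[of _ K])
qed

lemma L2v_classical_grad:
  assumes "test_fun \<Omega> \<phi>"
  shows "L2v \<Omega> (classical_grad \<phi>)"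
proof -
  obtain K where K: "compact K" "\<And>i x. x \<notin> K \<Longrightarrow> pderiv \<phi> i x = 0"
    and cont: "\<And>i. i \<in> Basis \<Longrightarrow> continuous_on UNIV (pderiv \<phi> i)"
    using test_funE[OF assms] by metis
  have grad_cont: "continuous_on UNIV (classical_grad \<phi>)"
    unfolding classical_grad_def[abs_def] using cont by (intro continuous_intros) auto
  then have "continuous_on UNIV (\<lambda>x. (norm (classical_grad \<phi> x))\<^sup>2)"
    by (intro continuous_intros)
  moreover have "classical_grad \<phi> x = 0" if "x \<notin> K" for x
    using K(2)[OF that] by (simp add: classical_grad_def)
  ultimately show ?thesis
    unfolding L2v_def using continuous_imp_measurable_on_domain[OF grad_cont] K(1)
    by (simp add: integrable_compact_support_on_domain[of _ K])
qed

lemma weak_grad_classical_grad: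
  assumes \<phi>: "test_fun \<Omega> \<phi>"
  shows "weak_grad \<Omega> \<phi> (classical_grad \<phi>)"
  unfolding weak_grad_def
proof (intro allI impI ballI)
  fix \<psi> and i :: 'a
  assume \<psi>: "test_fun \<Omega> \<psi>" and i: "i \<in> Basis"
  obtain K where K: "compact K" "\<And>x. x \<notin> K \<Longrightarrow> pderiv \<phi> i x = 0"
    and cont: "continuous_on UNIV (pderiv \<phi> i)" and diff: "\<And>x. \<phi> differentiable (at x)"
    using test_funE[OF \<phi>] i by metis
  obtain K' where K': "compact K'" "\<And>x. x \<notin> K' \<Longrightarrow> \<psi> x = 0" "\<And>x. x \<notin> K' \<Longrightarrow> pderiv \<psi> i x = 0"
    and cont': "continuous_on UNIV \<psi>" "continuous_on UNIV (pderiv \<psi> i)"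
    and diff': "\<And>x. \<psi> differentiable (at x)"
    using test_funE[OF \<psi>] i by metis
  have "test_fun \<Omega> (\<lambda>x. \<phi> x * \<psi> x)"
    using \<phi> \<psi> by (intro test_fun_mult) (auto simp: test_fun_def)
  then have "integral\<^sup>L (lebesgue_on \<Omega>) (pderiv (\<lambda>x. \<phi> x * \<psi> x) i) = 0"
    by (rule integral_pderiv_test_fun_on_domain[OF _ i])
  then have "integral\<^sup>L (lebesgue_on \<Omega>) (\<lambda>x. \<phi> x * pderiv \<psi> i x + pderiv \<phi> i x * \<psi> x) = 0"
    by (simp only: pderiv_mult[OF diff diff'])
  moreover have "integrable (lebesgue_on \<Omega>) (\<lambda>x. \<phi> x * pderiv \<psi> i x)"
    using L2_imp_integrable[OF L2_test_fun[OF \<phi>]] K'(3)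
    by (intro integrable_mult_compact_support[OF _ cont'(2) K'(1)]; simp)
  moreover have "integrable (lebesgue_on \<Omega>) (\<lambda>x. pderiv \<phi> i x * \<psi> x)"
    using integrable_compact_support_on_domain[OF cont K] K'(2)
    by (intro integrable_mult_compact_support[OF _ cont'(1) K'(1)]; simp)
  moreover have "classical_grad \<phi> x \<bullet> i = pderiv \<phi> i x" for x
    unfolding classical_grad_def using i by simp
  ultimately show "integral\<^sup>L (lebesgue_on \<Omega>) (\<lambda>x. \<phi> x * pderiv \<psi> i x)
      = - integral\<^sup>L (lebesgue_on \<Omega>) (\<lambda>x. classical_grad \<phi> x \<bullet> i * \<psi> x)"
    by simp
qed

lemma test_fun_in_H1: "test_fun \<Omega> \<phi> \<Longrightarrow> \<phi> \<in> H1 \<Omega>"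
  using L2_test_fun L2v_classical_grad weak_grad_classical_grad unfolding H1_def by blast

lemma weak_grad_const: "weak_grad \<Omega> (\<lambda>x. c) (\<lambda>x. 0)"
  unfolding weak_grad_def
proof (intro allI impI ballI)
  fix \<phi> and i :: 'a
  assume "test_fun \<Omega> \<phi>" "i \<in> Basis"
  then show "integral\<^sup>L (lebesgue_on \<Omega>) (\<lambda>x. c * pderiv \<phi> i x)
      = - integral\<^sup>L (lebesgue_on \<Omega>) (\<lambda>x. 0 \<bullet> i * \<phi> x)"
    using integral_pderiv_test_fun_on_domain[of \<phi> i] by simp
qed

lemma const_in_H1: "(\<lambda>x. c) \<in> H1 \<Omega>"
proof -
  have "L2 \<Omega> (\<lambda>x. c)" "L2v \<Omega> (\<lambda>x. 0)"
    by (simp_all add: L2_def L2v_def integrable_const_on_domain)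
  then show ?thesis
    using weak_grad_const unfolding H1_def by blast
qed

lemma grad_norm_const: "grad_norm \<Omega> (\<lambda>x. c) = 0"
  using grad_norm_weak_grad[OF const_in_H1 _ weak_grad_const] by (simp add: L2v_def)

lemma H1_norm_const: "H1_norm \<Omega> (\<lambda>x. c) = sqrt (integral\<^sup>L (lebesgue_on \<Omega>) (\<lambda>x. c\<^sup>2))"
  using H1_norm_weak_grad[OF const_in_H1 _ weak_grad_const] by (simp add: L2v_def)

lemma test_fun_in_H10:
  assumes "test_fun \<Omega> \<phi>"
  shows "\<phi> \<in> H10 \<Omega>"
proof -
  have "H1_norm \<Omega> (\<lambda>x. \<phi> x - \<phi> x) = 0"
    using H1_norm_const[of 0] by simp
  then show ?thesis
    using assms test_fun_in_H1[OF assms] unfolding H10_def by auto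
qed

lemma zero_in_H10: "(\<lambda>x. 0) \<in> H10 \<Omega>"
  by (rule test_fun_in_H10[OF test_fun_zero])

lemma H10_lin_comb:
  assumes u: "u \<in> H10 \<Omega>" and v: "v \<in> H10 \<Omega>"
  shows "(\<lambda>x. a * u x + b * v x) \<in> H10 \<Omega>"
proof -
  have "u \<in> H1 \<Omega>" "v \<in> H1 \<Omega>"
    using u v by (auto simp: H10_def)
  moreover have "\<exists>\<phi>. test_fun \<Omega> \<phi> \<and> H1_norm \<Omega> (\<lambda>x. (a * u x + b * v x) - \<phi> x) < e"
    if "e > 0" for e
  proof -
    define d where "d = e / (\<bar>a\<bar> + \<bar>b\<bar> + 1)"
    have "d > 0" "(\<bar>a\<bar> + \<bar>b\<bar>) * d < e"
      using \<open>e > 0\<close> by (auto simp: d_def field_simps add_nonneg_pos)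
    obtain \<phi> where \<phi>: "test_fun \<Omega> \<phi>" "H1_norm \<Omega> (\<lambda>x. u x - \<phi> x) < d"
      using u \<open>d > 0\<close> unfolding H10_def by blast
    obtain \<psi> where \<psi>: "test_fun \<Omega> \<psi>" "H1_norm \<Omega> (\<lambda>x. v x - \<psi> x) < d"
      using v \<open>d > 0\<close> unfolding H10_def by blast
    have "(\<lambda>x. u x - \<phi> x) \<in> H1 \<Omega>" "(\<lambda>x. v x - \<psi> x) \<in> H1 \<Omega>"
      using H1_lin_comb[OF \<open>u \<in> H1 \<Omega>\<close> test_fun_in_H1[OF \<phi>(1)], of 1 "-1"]
        H1_lin_comb[OF \<open>v \<in> H1 \<Omega>\<close> test_fun_in_H1[OF \<psi>(1)], of 1 "-1"] by simp_all
    then have "H1_norm \<Omega> (\<lambda>x. a * (u x - \<phi> x) + b * (v x - \<psi> x))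
        \<le> \<bar>a\<bar> * H1_norm \<Omega> (\<lambda>x. u x - \<phi> x) + \<bar>b\<bar> * H1_norm \<Omega> (\<lambda>x. v x - \<psi> x)"
      by (rule H1_norm_lin_comb_le)
    also have "\<dots> \<le> (\<bar>a\<bar> + \<bar>b\<bar>) * d"
      using \<phi>(2) \<psi>(2) by (simp add: distrib_right add_mono mult_left_mono)
    finally have "H1_norm \<Omega> (\<lambda>x. (a * u x + b * v x) - (a * \<phi> x + b * \<psi> x)) < e"
      using \<open>(\<bar>a\<bar> + \<bar>b\<bar>) * d < e\<close> by (simp add: algebra_simps)
    then show ?thesis
      using test_fun_lin_comb[OF \<phi>(1) \<psi>(1)] by blast
  qed
  ultimately show ?thesis
    unfolding H10_def using H1_lin_comb by blast
qed

lemma integral_pos_if_continuous_pos: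
  fixes f :: "'a \<Rightarrow> real"
  assumes "integrable (lebesgue_on \<Omega>) f" "\<And>x. 0 \<le> f x" "continuous_on \<Omega> f" "x0 \<in> \<Omega>" "f x0 > 0"
  shows "integral\<^sup>L (lebesgue_on \<Omega>) f > 0"
proof -
  define U where "U = f -` {0<..} \<inter> \<Omega>"
  have "open U"
    unfolding U_def
    using continuous_on_open_vimage[OF open_domain, THEN iffD1, OF assms(3), rule_format, OF open_greaterThan] .
  have "integral\<^sup>L (lebesgue_on \<Omega>) f \<noteq> 0"
  proof
    assume "integral\<^sup>L (lebesgue_on \<Omega>) f = 0"
    then have "AE x in lebesgue_on \<Omega>. f x = 0"
      using integral_nonneg_eq_0_iff_AE[OF assms(1)] assms(2) by auto
    then have "AE x in lebesgue. x \<in> \<Omega> \<longrightarrow> f x = 0"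
      using AE_restrict_space_iff[OF domain_sets(2)] by simp
    then have "AE x in lebesgue. x \<notin> U"
      unfolding U_def by (rule AE_mp[OF _ AE_I2]) auto
    moreover have "U \<in> sets lebesgue"
      using \<open>open U\<close> by (simp add: borel_open)
    moreover have "{x \<in> space lebesgue. \<not> x \<notin> U} = U"
      by simp
    ultimately have "U \<in> null_sets lebesgue"
      using AE_iff_null[of lebesgue "\<lambda>x. x \<notin> U"] by simp
    then have "negligible U"
      by (simp add: negligible_iff_null_sets)
    moreover have "U \<noteq> {}"
      using assms(4,5) by (auto simp: U_def)
    ultimately show False
      using open_not_negligible \<open>open U\<close> by blast
  qed
  moreover have "integral\<^sup>L (lebesgue_on \<Omega>) f \<ge> 0"
    using assms(2) by (intro integral_nonneg_AE) auto
  ultimately show ?thesis by simp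
qed

lemma H1_norm_one_pos:
  assumes "\<Omega> \<noteq> {}"
  shows "H1_norm \<Omega> (\<lambda>x. 1) > 0"
proof -
  obtain x0 where "x0 \<in> \<Omega>" using assms by blast
  then have "integral\<^sup>L (lebesgue_on \<Omega>) (\<lambda>x. (1::real)\<^sup>2) > 0"
    by (intro integral_pos_if_continuous_pos integrable_const_on_domain) auto
  then show ?thesis
    by (simp add: H1_norm_const)
qed

lemma exists_test_fun_H1_norm_pos:
  assumes "\<Omega> \<noteq> {}"
  obtains \<theta> where "test_fun \<Omega> \<theta>" "H1_norm \<Omega> \<theta> > 0"
proof -
  obtain x0 where "x0 \<in> \<Omega>" using assms by blast
  then obtain p q where box: "box p q \<subseteq> \<Omega>" "x0 \<in> box p q"
    using open_contains_box[OF open_domain] by metis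
  have "(\<lambda>n. box_cutoff p q n x0) \<longlonglongrightarrow> 1"
    by (rule box_cutoff_tendsto_1[OF box(2)])
  then have "\<forall>\<^sub>F n in sequentially. box_cutoff p q n x0 > 0"
    by (rule order_tendstoD) simp
  then obtain n where "box_cutoff p q n x0 > 0"
    by (meson eventually_sequentially order_refl)
  have \<theta>: "test_fun \<Omega> (box_cutoff p q n)"
    by (rule test_fun_box_cutoff[OF box(1)])
  have "integral\<^sup>L (lebesgue_on \<Omega>) (\<lambda>x. (box_cutoff p q n x)\<^sup>2) > 0"
  proof (rule integral_pos_if_continuous_pos[OF _ _ _ \<open>x0 \<in> \<Omega>\<close>])
    show "integrable (lebesgue_on \<Omega>) (\<lambda>x. (box_cutoff p q n x)\<^sup>2)"
      using test_fun_in_H1[OF \<theta>] by (simp add: H1_def L2_def)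
    show "continuous_on \<Omega> (\<lambda>x. (box_cutoff p q n x)\<^sup>2)"
      using smooth_fun_imp_continuous_on[OF smooth_fun_box_cutoff] by (intro continuous_intros)
  qed (use \<open>box_cutoff p q n x0 > 0\<close> in auto)
  moreover have "0 \<le> integral\<^sup>L (lebesgue_on \<Omega>) (\<lambda>x. (norm (wgrad \<Omega> (box_cutoff p q n) x))\<^sup>2)"
    by (intro integral_nonneg_AE) auto
  ultimately have "H1_norm \<Omega> (box_cutoff p q n) > 0"
    unfolding H1_norm_def by (simp add: add_pos_nonneg)
  with \<theta> show ?thesis using that by blast
qed

end

section \<open>Stability of the discrete harmonic extension\<close>

context bounded_open_domain
begin

lemma Poincare_const_nonneg:
  assumes "\<Omega> \<noteq> {}" and Poincare: "\<And>v. v \<in> H10 \<Omega> \<Longrightarrow> H1_norm \<Omega> v \<le> C * grad_norm \<Omega> v"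
  shows "0 \<le> C"
proof -
  obtain \<theta> where \<theta>: "test_fun \<Omega> \<theta>" "H1_norm \<Omega> \<theta> > 0"
    using exists_test_fun_H1_norm_pos[OF assms(1)] by blast
  then have "0 < C * grad_norm \<Omega> \<theta>"
    using Poincare[OF test_fun_in_H10[OF \<theta>(1)]] by linarith
  then show ?thesis
    using grad_norm_nonneg[of \<Omega> \<theta>] by (simp add: zero_less_mult_iff)
qed

lemma bound_const_nonneg:
  assumes "\<Omega> \<noteq> {}" and bound: "\<And>v. v \<in> H1 \<Omega> \<Longrightarrow> H1_norm \<Omega> (T v) \<le> B * H1_norm \<Omega> v"
  shows "0 \<le> B"
proof -
  have "0 \<le> B * H1_norm \<Omega> (\<lambda>x. 1)"
    using H1_norm_nonneg[of \<Omega> "T (\<lambda>x. 1)"] bound[OF const_in_H1[of 1]] by linarith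
  then show ?thesis
    using H1_norm_one_pos[OF assms(1)] by (simp add: zero_le_mult_iff)
qed

lemma extension_const_ge_1:
  assumes "\<Omega> \<noteq> {}"
    and extension: "\<And>u w. u \<in> H1 \<Omega> \<Longrightarrow> w \<in> H1 \<Omega> \<Longrightarrow> (\<lambda>x. w x - u x) \<in> H10 \<Omega> \<Longrightarrow>
      (\<forall>v\<in>H1 \<Omega>. (\<lambda>x. v x - u x) \<in> H10 \<Omega> \<longrightarrow> grad_norm \<Omega> w \<le> grad_norm \<Omega> v) \<Longrightarrow>
      H1_norm \<Omega> w \<le> C * trace_norm \<Omega> u"
  shows "1 \<le> C"
proof -
  let ?one = "\<lambda>x::'a. 1::real" and ?t = "trace_norm \<Omega> (\<lambda>x. 1)"
  have "grad_norm \<Omega> ?one \<le> grad_norm \<Omega> v" for v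
    using grad_norm_const[of 1] grad_norm_nonneg[of \<Omega> v] by simp
  then have ext: "H1_norm \<Omega> ?one \<le> C * ?t"
    using extension[OF const_in_H1 const_in_H1] zero_in_H10 by simp
  have t: "0 \<le> ?t" "?t \<le> H1_norm \<Omega> ?one"
    using trace_norm_nonneg[OF const_in_H1 zero_in_H10] trace_norm_le_H1_norm[OF const_in_H1 zero_in_H10]
    by auto
  have "0 < ?t"
  proof (rule ccontr)
    assume "\<not> 0 < ?t"
    with t(1) have "?t = 0" by simp
    with ext H1_norm_one_pos[OF assms(1)] show False by simp
  qed
  moreover have "?t \<le> C * ?t"
    using ext t(2) by linarith
  ultimately show ?thesis
    by (simp add: mult_le_cancel_right1)
qed

lemma discrete_extension_le:
  fixes V :: "('a \<Rightarrow> real) set" and P :: "('a \<Rightarrow> real) \<Rightarrow> 'a \<Rightarrow> real"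
  assumes V: "V \<subseteq> H1 \<Omega>"
    and P_maps: "\<And>v. v \<in> H1 \<Omega> \<Longrightarrow> P v \<in> V"
    and P_linear: "\<And>u v a b. u \<in> H1 \<Omega> \<Longrightarrow> v \<in> H1 \<Omega> \<Longrightarrow>
      P (\<lambda>x. a * u x + b * v x) = (\<lambda>x. a * P u x + b * P v x)"
    and P_proj: "\<And>v. v \<in> V \<Longrightarrow> P v = v"
    and P_zero: "\<And>v. v \<in> H10 \<Omega> \<Longrightarrow> P v \<in> H10 \<Omega>"
    and P_bound: "\<And>v. v \<in> H1 \<Omega> \<Longrightarrow> H1_norm \<Omega> (P v) \<le> B * H1_norm \<Omega> v"
    and Poincare: "\<And>v. v \<in> H10 \<Omega> \<Longrightarrow> H1_norm \<Omega> v \<le> C_P * grad_norm \<Omega> v" "0 \<le> C_P"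
    and w: "w \<in> V" "(\<lambda>x. w x - u x) \<in> H10 \<Omega>"
    and w_min: "\<And>v. v \<in> V \<Longrightarrow> (\<lambda>x. v x - u x) \<in> H10 \<Omega> \<Longrightarrow> grad_norm \<Omega> w \<le> grad_norm \<Omega> v"
    and v: "v \<in> H1 \<Omega>" "(\<lambda>x. v x - u x) \<in> H10 \<Omega>"
  shows "H1_norm \<Omega> w \<le> (1 + 2 * C_P) * (B * H1_norm \<Omega> v)"
proof -
  have "w \<in> H1 \<Omega>" using V w(1) by blast
  have "P v \<in> V" "P v \<in> H1 \<Omega>" using P_maps[OF v(1)] V by blast+
  have "(\<lambda>x. v x - w x) \<in> H10 \<Omega>"
    using H10_lin_comb[OF v(2) w(2), of 1 "-1"] by simp
  moreover have "P (\<lambda>x. v x - w x) = (\<lambda>x. P v x - w x)"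
    using P_linear[OF v(1) \<open>w \<in> H1 \<Omega>\<close>, of 1 "-1"] P_proj[OF w(1)] by simp
  ultimately have Pv_w: "(\<lambda>x. P v x - w x) \<in> H10 \<Omega>"
    using P_zero[of "\<lambda>x. v x - w x"] by simp
  then have "(\<lambda>x. P v x - u x) \<in> H10 \<Omega>"
    using H10_lin_comb[OF Pv_w w(2), of 1 1] by simp
  then have min: "grad_norm \<Omega> w \<le> grad_norm \<Omega> (P v)"
    by (rule w_min[OF \<open>P v \<in> V\<close>])
  have w_Pv: "(\<lambda>x. w x - P v x) \<in> H10 \<Omega>"
    using H10_lin_comb[OF Pv_w zero_in_H10, of "-1" 0] by simp
  have "grad_norm \<Omega> (\<lambda>x. w x - P v x) \<le> grad_norm \<Omega> w + grad_norm \<Omega> (P v)"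
    using grad_norm_lin_comb_le[OF \<open>w \<in> H1 \<Omega>\<close> \<open>P v \<in> H1 \<Omega>\<close>, of 1 "-1"] by simp
  also have "\<dots> \<le> 2 * H1_norm \<Omega> (P v)"
    using min grad_norm_le_H1_norm[of \<Omega> "P v"] by simp
  finally have "C_P * grad_norm \<Omega> (\<lambda>x. w x - P v x) \<le> C_P * (2 * H1_norm \<Omega> (P v))"
    by (rule mult_left_mono[OF _ Poincare(2)])
  then have "H1_norm \<Omega> (\<lambda>x. w x - P v x) \<le> 2 * C_P * H1_norm \<Omega> (P v)"
    using Poincare(1)[OF w_Pv] by simp
  moreover have "(\<lambda>x. w x - P v x) \<in> H1 \<Omega>"
    using w_Pv by (simp add: H10_def)
  then have "H1_norm \<Omega> w \<le> H1_norm \<Omega> (\<lambda>x. w x - P v x) + H1_norm \<Omega> (P v)"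
    using H1_norm_lin_comb_le[OF _ \<open>P v \<in> H1 \<Omega>\<close>, of "\<lambda>x. w x - P v x" 1 1] by simp
  ultimately have "H1_norm \<Omega> w \<le> (1 + 2 * C_P) * H1_norm \<Omega> (P v)"
    by (simp add: algebra_simps)
  also have "\<dots> \<le> (1 + 2 * C_P) * (B * H1_norm \<Omega> v)"
    using P_bound[OF v(1)] Poincare(2) by (intro mult_left_mono) auto
  finally show ?thesis .
qed

lemma discrete_extension_le_trace_norm:
  fixes V :: "('a \<Rightarrow> real) set" and P :: "('a \<Rightarrow> real) \<Rightarrow> 'a \<Rightarrow> real"
  assumes V: "V \<subseteq> H1 \<Omega>"
    and P_maps: "\<And>v. v \<in> H1 \<Omega> \<Longrightarrow> P v \<in> V"
    and P_linear: "\<And>u v a b. u \<in> H1 \<Omega> \<Longrightarrow> v \<in> H1 \<Omega> \<Longrightarrow>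
      P (\<lambda>x. a * u x + b * v x) = (\<lambda>x. a * P u x + b * P v x)"
    and P_proj: "\<And>v. v \<in> V \<Longrightarrow> P v = v"
    and P_zero: "\<And>v. v \<in> H10 \<Omega> \<Longrightarrow> P v \<in> H10 \<Omega>"
    and P_bound: "\<And>v. v \<in> H1 \<Omega> \<Longrightarrow> H1_norm \<Omega> (P v) \<le> B * H1_norm \<Omega> v"
    and Poincare: "\<And>v. v \<in> H10 \<Omega> \<Longrightarrow> H1_norm \<Omega> v \<le> C_P * grad_norm \<Omega> v" "0 \<le> C_P"
    and w: "w \<in> V" "(\<lambda>x. w x - u x) \<in> H10 \<Omega>"
    and w_min: "\<And>v. v \<in> V \<Longrightarrow> (\<lambda>x. v x - u x) \<in> H10 \<Omega> \<Longrightarrow> grad_norm \<Omega> w \<le> grad_norm \<Omega> v"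
    and u: "u \<in> H1 \<Omega>" and "0 \<le> B"
  shows "H1_norm \<Omega> w \<le> (1 + 2 * C_P) * B * trace_norm \<Omega> u"
proof (rule le_mult_trace_norm[OF u zero_in_H10])
  show "0 \<le> (1 + 2 * C_P) * B"
    using Poincare(2) \<open>0 \<le> B\<close> by simp
  fix v assume v: "v \<in> H1 \<Omega>" "(\<lambda>x. v x - u x) \<in> H10 \<Omega>"
  have "H1_norm \<Omega> w \<le> (1 + 2 * C_P) * (B * H1_norm \<Omega> v)"
    by (rule discrete_extension_le[OF V P_maps P_linear P_proj P_zero P_bound Poincare w w_min v])
  then show "H1_norm \<Omega> w \<le> (1 + 2 * C_P) * B * H1_norm \<Omega> v"
    by (simp only: mult.assoc)
qed

end

theorem mainTheorem4:
  fixes \<Omega> :: "'a::euclidean_space set"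
    and \<T> :: "real \<Rightarrow> 'a set set" and k :: "real \<Rightarrow> nat"
    and P :: "real \<Rightarrow> ('a \<Rightarrow> real) \<Rightarrow> ('a \<Rightarrow> real)"
    and C_E C_P B :: real
  assumes dim: "DIM('a) = 2 \<or> DIM('a) = 3"
    and dom: "polyhedral_domain \<Omega>"
    and CE: "\<And>u w. u \<in> H1 \<Omega> \<Longrightarrow> w \<in> H1 \<Omega> \<Longrightarrow> (\<lambda>x. w x - u x) \<in> H10 \<Omega> \<Longrightarrow>
               (\<forall>v\<in>H1 \<Omega>. (\<lambda>x. v x - u x) \<in> H10 \<Omega> \<longrightarrow> grad_norm \<Omega> w \<le> grad_norm \<Omega> v) \<Longrightarrow>
               H1_norm \<Omega> w \<le> C_E * trace_norm \<Omega> u"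
    and CP: "\<And>v. v \<in> H10 \<Omega> \<Longrightarrow> H1_norm \<Omega> v \<le> C_P * grad_norm \<Omega> v"
    and mesh: "\<And>h. h > 0 \<Longrightarrow> simplicial_mesh (\<T> h) \<Omega> \<and> k h \<ge> 1"
    and conforming: "\<And>h. h > 0 \<Longrightarrow> lagrange_space \<Omega> (\<T> h) (k h) \<subseteq> H1 \<Omega>"
    and P_maps: "\<And>h v. h > 0 \<Longrightarrow> v \<in> H1 \<Omega> \<Longrightarrow> P h v \<in> lagrange_space \<Omega> (\<T> h) (k h)"
    and P_linear: "\<And>h u v a b. h > 0 \<Longrightarrow> u \<in> H1 \<Omega> \<Longrightarrow> v \<in> H1 \<Omega> \<Longrightarrow>
               P h (\<lambda>x. a * u x + b * v x) = (\<lambda>x. a * P h u x + b * P h v x)"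
    and P_proj: "\<And>h v. h > 0 \<Longrightarrow> v \<in> lagrange_space \<Omega> (\<T> h) (k h) \<Longrightarrow> P h v = v"
    and P_zero: "\<And>h. h > 0 \<Longrightarrow> P h ` H10 \<Omega> = lagrange_space0 \<Omega> (\<T> h) (k h)"
    and P_bound: "\<And>h v. h > 0 \<Longrightarrow> v \<in> H1 \<Omega> \<Longrightarrow> H1_norm \<Omega> (P h v) \<le> B * H1_norm \<Omega> v"
  shows "\<forall>h>0. \<forall>u \<in> lagrange_space \<Omega> (\<T> h) (k h). \<forall>w \<in> lagrange_space \<Omega> (\<T> h) (k h).
           (\<lambda>x. w x - u x) \<in> H10 \<Omega> \<and>
           (\<forall>v \<in> lagrange_space \<Omega> (\<T> h) (k h).
               (\<lambda>x. v x - u x) \<in> H10 \<Omega> \<longrightarrow> grad_norm \<Omega> w \<le> grad_norm \<Omega> v)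
           \<longrightarrow> H1_norm \<Omega> w \<le> (1 + 2 * C_P) * B * C_E * trace_norm \<Omega> u"
proof -
  \<comment> \<open>As the trace norm is
    the minimal-extension norm, neither is the harmonic extension: \<open>CE\<close> only serves, for the
    constant function \<open>1\<close>, to show \<open>1 \<le> C_E\<close>.\<close>
  interpret bounded_open_domain \<Omega>
    using dom by unfold_locales (simp_all add: polyhedral_domain_def)
  have "\<Omega> \<noteq> {}"
    using dom by (simp add: polyhedral_domain_def)
  have "0 \<le> C_P"
    using Poincare_const_nonneg[OF \<open>\<Omega> \<noteq> {}\<close> CP] .
  have "1 \<le> C_E"
    using extension_const_ge_1[OF \<open>\<Omega> \<noteq> {}\<close> CE] .
  show ?thesis
  proof (intro allI impI ballI)
    fix h u w
    assume h: "h > 0" and V: "u \<in> lagrange_space \<Omega> (\<T> h) (k h)" "w \<in> lagrange_space \<Omega> (\<T> h) (k h)"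
      and w: "(\<lambda>x. w x - u x) \<in> H10 \<Omega> \<and> (\<forall>v \<in> lagrange_space \<Omega> (\<T> h) (k h).
               (\<lambda>x. v x - u x) \<in> H10 \<Omega> \<longrightarrow> grad_norm \<Omega> w \<le> grad_norm \<Omega> v)"
    then have w_H10: "(\<lambda>x. w x - u x) \<in> H10 \<Omega>"
      and w_min: "\<And>v. v \<in> lagrange_space \<Omega> (\<T> h) (k h) \<Longrightarrow> (\<lambda>x. v x - u x) \<in> H10 \<Omega> \<Longrightarrow>
                   grad_norm \<Omega> w \<le> grad_norm \<Omega> v"
      by blast+
    have "0 \<le> B"
      using bound_const_nonneg[OF \<open>\<Omega> \<noteq> {}\<close> P_bound[OF h]] .
    have "u \<in> H1 \<Omega>"
      using conforming[OF h] V(1) by blast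
    have "H1_norm \<Omega> w \<le> (1 + 2 * C_P) * B * trace_norm \<Omega> u"
      by (rule discrete_extension_le_trace_norm[OF conforming[OF h] P_maps[OF h] P_linear[OF h]
            P_proj[OF h] _ P_bound[OF h] CP \<open>0 \<le> C_P\<close> V(2) w_H10 w_min \<open>u \<in> H1 \<Omega>\<close> \<open>0 \<le> B\<close>])
         (use P_zero[OF h] in \<open>auto simp: lagrange_space0_def\<close>)
    also have "\<dots> \<le> (1 + 2 * C_P) * B * (C_E * trace_norm \<Omega> u)"
      using \<open>1 \<le> C_E\<close> \<open>0 \<le> C_P\<close> \<open>0 \<le> B\<close> trace_norm_nonneg[OF \<open>u \<in> H1 \<Omega>\<close> zero_in_H10]
      by (intro mult_left_mono) (simp_all add: mult_le_cancel_right1)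
    finally show "H1_norm \<Omega> w \<le> (1 + 2 * C_P) * B * C_E * trace_norm \<Omega> u"
      by (simp add: mult.assoc)
  qed
qed

end
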